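(* With $D$, $K$, $\star$, $D_1=D[X]$, $\mathcal S_1^\star$ and $[\star]$ as defined in the context, for every $E\in\overline{\boldsymbol F}(D)$: (c) $(ED[X])^{[\star]}\cap K=ED_1[Y]_{\mathcal S_1^\star}\cap K=E^{\widetilde\star}$; (d) $(ED[X])^{[\star]}=E^{\widetilde\star}D[X]$.
   Context: $D$ is an integral domain with quotient field $K$, $X,Y$ indeterminates, $\star$ a semistar operation on $D$, $D_1:=D[X]$, $K_1:=K(X)$. $\overline{\boldsymbol F}(A)$ is the set of nonzero $A$-submodules of the quotient field of $A$. A semistar operation on $A$ is a map $\star:\overline{\boldsymbol F}(A)\to\overline{\boldsymbol F}(A)$ with $(xE)^\star=xE^\star$ for nonzero $x$ in the quotient field, $E\subseteq F\Rightarrow E^\star\subseteq F^\star$, $E\subseteq E^\star$, $(E^\star)^\star=E^\star$. $E^{\star_f}=\bigcup\{F^\star\mid F\subseteq E,\ F$ nonzero finitely generated fractional ideal$\}$. A nonzero ideal $I$ is a quasi-$\star$-ideal if $I^\star\cap D=I$; $\mathrm{QMax}^\star(D)$ is the set of maximal elements among proper quasi-$\star$-ideals; $E^{\widetilde\star}=\bigcap\{ED_P\mid P\in\mathrm{QMax}^{\star_f}(D)\}$. $\boldsymbol\Delta_1^\star:=\{Q_1\in\mathrm{Spec}(D_1)\mid Q_1\cap D=(0),\ \text{or } Q_1=(Q_1\cap D)[X]\text{ and }(Q_1\cap D)^{\star_f}\subsetneq D^\star\}$; $\mathcal S_1^\star:=D_1[Y]\setminus\bigcup\{Q_1[Y]\mid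 Q_1\in\boldsymbol\Delta_1^\star\}$; $[\star]$ is the semistar operation on $D_1$ given by $E^{[\star]}:=E[Y]_{\mathcal S_1^\star}\cap K_1$ (for $E\in\overline{\boldsymbol F}(D_1)$), where $E[Y]_{\mathcal S_1^\star}$ is the $D_1[Y]_{\mathcal S_1^\star}$-submodule of $K(X,Y)$ generated by $E$. *)

theory Defs
  imports "HOL-Computational_Algebra.Polynomial"
begin

text \<open>All rings live inside an ambient field of type 'a (playing the role of a field
containing K(X,Y)).  Subrings of a field are automatically integral domains.\<close>

definition subring :: "'a::field set \<Rightarrow> bool" where
  "subring A \<longleftrightarrow> 0 \<in> A \<and> 1 \<in> A \<and> (\<forall>a\<in>A. \<forall>b\<in>A. a + b \<in> A \<and> a - b \<in> A \<and> a * b \<in> A)"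

definition qf :: "'a::field set \<Rightarrow> 'a set" where
  "qf A = {a / b | a b. a \<in> A \<and> b \<in> A \<and> b \<noteq> 0}"

definition polyring :: "'a::field set \<Rightarrow> 'a \<Rightarrow> 'a set" where
  "polyring A x = {poly p x | p. \<forall>i. coeff p i \<in> A}"

text \<open>x is transcendental (an indeterminate) over the field L.\<close>
definition transc_over :: "'a::field set \<Rightarrow> 'a \<Rightarrow> bool" where
  "transc_over L x \<longleftrightarrow> (\<forall>p. (\<forall>i. coeff p i \<in> L) \<longrightarrow> poly p x = 0 \<longrightarrow> p = 0)"

definition genmod :: "'a::field set \<Rightarrow> 'a set \<Rightarrow> 'a set" where
  "genmod R E = {\<Sum>s\<in>S. c s * s | S c. finite S \<and> S \<subseteq> E \<and> (\<forall>s. c s \<in> R)}"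

definition is_module :: "'a::field set \<Rightarrow> 'a set \<Rightarrow> bool" where
  "is_module A M \<longleftrightarrow> 0 \<in> M \<and> (\<forall>a\<in>M. \<forall>b\<in>M. a + b \<in> M) \<and> (\<forall>r\<in>A. \<forall>m\<in>M. r * m \<in> M)"

definition Fbar :: "'a::field set \<Rightarrow> 'a set set" where
  "Fbar A = {M. M \<subseteq> qf A \<and> is_module A M \<and> M \<noteq> {0}}"

definition semistar :: "'a::field set \<Rightarrow> ('a set \<Rightarrow> 'a set) \<Rightarrow> bool" where
  "semistar A st \<longleftrightarrow>
     (\<forall>E\<in>Fbar A. st E \<in> Fbar A) \<and>
     (\<forall>x\<in>qf A. \<forall>E\<in>Fbar A. x \<noteq> 0 \<longrightarrow> st ((\<lambda>e. x * e) ` E) = (\<lambda>e. x * e) ` st E) \<and>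
     (\<forall>E\<in>Fbar A. \<forall>F\<in>Fbar A. E \<subseteq> F \<longrightarrow> st E \<subseteq> st F) \<and>
     (\<forall>E\<in>Fbar A. E \<subseteq> st E) \<and>
     (\<forall>E\<in>Fbar A. st (st E) = st E)"

definition fg_frac :: "'a::field set \<Rightarrow> 'a set \<Rightarrow> bool" where
  "fg_frac A F \<longleftrightarrow> F \<in> Fbar A \<and> (\<exists>S. finite S \<and> S \<subseteq> qf A \<and> F = genmod A S)
      \<and> (\<exists>d\<in>A. d \<noteq> 0 \<and> (\<lambda>f. d * f) ` F \<subseteq> A)"

definition star_f :: "'a::field set \<Rightarrow> ('a set \<Rightarrow> 'a set) \<Rightarrow> 'a set \<Rightarrow> 'a set" where
  "star_f A st E = \<Union>{st F | F. F \<subseteq> E \<and> fg_frac A F}"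

definition ideal_of :: "'a::field set \<Rightarrow> 'a set \<Rightarrow> bool" where
  "ideal_of A I \<longleftrightarrow> I \<subseteq> A \<and> is_module A I"

definition prime_ideal_of :: "'a::field set \<Rightarrow> 'a set \<Rightarrow> bool" where
  "prime_ideal_of A P \<longleftrightarrow> ideal_of A P \<and> P \<noteq> A \<and>
     (\<forall>a\<in>A. \<forall>b\<in>A. a * b \<in> P \<longrightarrow> a \<in> P \<or> b \<in> P)"

definition quasi_star_ideal :: "'a::field set \<Rightarrow> ('a set \<Rightarrow> 'a set) \<Rightarrow> 'a set \<Rightarrow> bool" where
  "quasi_star_ideal A st I \<longleftrightarrow> ideal_of A I \<and> I \<noteq> {0} \<and> st I \<inter> A = I"

definition QMax :: "'a::field set \<Rightarrow> ('a set \<Rightarrow> 'a set) \<Rightarrow> 'a set set" where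
  "QMax A st = {P. quasi_star_ideal A st P \<and> P \<noteq> A \<and>
       (\<forall>Q. quasi_star_ideal A st Q \<and> Q \<noteq> A \<and> P \<subseteq> Q \<longrightarrow> Q = P)}"

definition loc :: "'a::field set \<Rightarrow> 'a set \<Rightarrow> 'a set" where
  "loc A P = {a / s | a s. a \<in> A \<and> s \<in> A - P}"

text \<open>\<open>E^{\<widetilde>\<star>}\<close>; intersected with the quotient field so that the empty
  intersection is K.\<close>
definition star_tilde :: "'a::field set \<Rightarrow> ('a set \<Rightarrow> 'a set) \<Rightarrow> 'a set \<Rightarrow> 'a set" where
  "star_tilde A st E = qf A \<inter> \<Inter>{genmod (loc A P) E | P. P \<in> QMax A (star_f A st)}"

definition Delta1 :: "'a::field set \<Rightarrow> 'a \<Rightarrow> ('a set \<Rightarrow> 'a set) \<Rightarrow> 'a set set" where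
  "Delta1 D X st = {Q1. prime_ideal_of (polyring D X) Q1 \<and>
      (Q1 \<inter> D = {0} \<or>
       (Q1 = polyring (Q1 \<inter> D) X \<and> star_f D st (Q1 \<inter> D) \<subset> st D))}"

definition S1 :: "'a::field set \<Rightarrow> 'a \<Rightarrow> 'a \<Rightarrow> ('a set \<Rightarrow> 'a set) \<Rightarrow> 'a set" where
  "S1 D X Y st = polyring (polyring D X) Y - \<Union>{polyring Q1 Y | Q1. Q1 \<in> Delta1 D X st}"

definition D1YS :: "'a::field set \<Rightarrow> 'a \<Rightarrow> 'a \<Rightarrow> ('a set \<Rightarrow> 'a set) \<Rightarrow> 'a set" where
  "D1YS D X Y st = {a / s | a s. a \<in> polyring (polyring D X) Y \<and> s \<in> S1 D X Y st}"

definition bracket_star :: "'a::field set \<Rightarrow> 'a \<Rightarrow> 'a \<Rightarrow> ('a set \<Rightarrow> 'a set) \<Rightarrow> 'a set \<Rightarrow> 'a set" where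
  "bracket_star D X Y st E = genmod (D1YS D X Y st) E \<inter> qf (polyring D X)"

end

theory Submission
  imports Defs
begin

(* Theorem 2.3 (c), (d).  Write D1 = D[X], K = qf D, R = D1[Y]_S1 and, for E in F(D),
   E^~ = star_tilde D st E.  The statement reduces to two inclusions.

   (1) E^~ \<subseteq> E R.  For z in E^~ the conductor ideal (E :_D z) lies in no
       P in QMax^{star_f}(D); since every proper quasi-star_f-ideal extends to a maximal
       one (Zorn), some finite S \<subseteq> (E :_D z) has 1 \<in> (S)^star.  A polynomial f in D[Y]
       with coefficient set S avoids every Q1[Y] with Q1 in Delta1, so f \<in> S1 and
       z f \<in> E D1[Y] gives z \<in> E R.
   (2) E R \<inter> K(X) \<subseteq> E^~ D1.  For u on the left, s u \<in> E D1[Y] for some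
       s = \<Sum> sigma_k Y^k in S1, and comparing Y-coefficients gives sigma_k u \<in> E D1.
       The sigma_k lie in no prime Q1 of D1 with Q1 \<inter> D = 0, which forces u \<in> K[X]
       (a minimal-degree conductor argument with pseudo-division); for every P in QMax
       some sigma_k avoids P[X], and a McCoy-type cancellation puts every X-coefficient
       of u into E D_P.
   The theorem follows from (1), (2) and the contraction M D1 \<inter> K = M for M \<subseteq> K. *)

section \<open>Subrings and quotient fields\<close>

lemma subringD:
  assumes "subring A"
  shows "0 \<in> A" "1 \<in> A" "a \<in> A \<Longrightarrow> b \<in> A \<Longrightarrow> a + b \<in> A"
    "a \<in> A \<Longrightarrow> b \<in> A \<Longrightarrow> a - b \<in> A" "a \<in> A \<Longrightarrow> b \<in> A \<Longrightarrow> a * b \<in> A"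
  using assms unfolding subring_def by auto

lemma subring_sum: "subring A \<Longrightarrow> (\<And>i. i \<in> I \<Longrightarrow> f i \<in> A) \<Longrightarrow> sum f I \<in> A"
  by (induction I rule: infinite_finite_induct) (simp_all add: subringD)

lemma subring_power: "subring A \<Longrightarrow> a \<in> A \<Longrightarrow> a ^ n \<in> A"
  by (induction n) (auto simp: subringD)

lemma qf_subset: "subring A \<Longrightarrow> A \<subseteq> qf A"
  unfolding qf_def by (force intro: exI[of _ 1] simp: subringD)

lemma qf_mono: "A \<subseteq> B \<Longrightarrow> qf A \<subseteq> qf B"
  unfolding qf_def by blast

lemma qf_subring:
  assumes A: "subring A" shows "subring (qf A)"
  unfolding subring_def
proof (intro conjI ballI)
  show "0 \<in> qf A" "1 \<in> qf A" using qf_subset[OF A] A by (auto simp: subringD)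
next
  fix x y assume x: "x \<in> qf A" and y: "y \<in> qf A"
  then obtain a b c d where ab: "a \<in> A" "b \<in> A" "b \<noteq> 0" "x = a / b"
    and cd: "c \<in> A" "d \<in> A" "d \<noteq> 0" "y = c / d" unfolding qf_def by blast
  have bd: "b * d \<in> A" "b * d \<noteq> 0" using ab cd A by (auto simp: subringD)
  have "x + y = (a * d + c * b) / (b * d)" "x - y = (a * d - c * b) / (b * d)"
    "x * y = (a * c) / (b * d)" using ab cd by (simp_all add: field_simps)
  moreover have "a * d + c * b \<in> A" "a * d - c * b \<in> A" "a * c \<in> A"
    using ab cd A by (auto simp: subringD)
  ultimately show "x + y \<in> qf A" "x - y \<in> qf A" "x * y \<in> qf A"
    using bd unfolding qf_def by blast+
qed

lemma qf_inverse:
  assumes x: "x \<in> qf A" shows "1 / x \<in> qf A"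
proof -
  obtain a b where ab: "a \<in> A" "b \<in> A" "b \<noteq> 0" "x = a / b" using x unfolding qf_def by blast
  show ?thesis
  proof (cases "a = 0")
    case True then show ?thesis using ab x by simp
  next
    case False then show ?thesis using ab unfolding qf_def by auto
  qed
qed

section \<open>Polynomial rings\<close>

lemma coeff_mult_in:
  assumes "subring A" "\<And>i. coeff p i \<in> A" "\<And>i. coeff q i \<in> A"
  shows "coeff (p * q) n \<in> A"
  unfolding coeff_mult using assms by (intro subring_sum) (auto simp: subringD)

lemma polyringI: "(\<And>i. coeff p i \<in> A) \<Longrightarrow> poly p x \<in> polyring A x"
  unfolding polyring_def by blast

lemma polyringE: "y \<in> polyring A x \<Longrightarrow> (\<And>p. y = poly p x \<Longrightarrow> (\<And>i. coeff p i \<in> A) \<Longrightarrow> P) \<Longrightarrow> P"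
  unfolding polyring_def by blast

lemma polyring_subring:
  assumes A: "subring A" shows "subring (polyring A x)"
proof -
  have "poly 0 x \<in> polyring A x" "poly 1 x \<in> polyring A x"
    by (rule polyringI, simp add: subringD[OF A] coeff_1)+
  moreover have "a + b \<in> polyring A x \<and> a - b \<in> polyring A x \<and> a * b \<in> polyring A x"
    if ha: "a \<in> polyring A x" and hb: "b \<in> polyring A x" for a b
  proof -
    obtain p where p: "a = poly p x" "\<And>i. coeff p i \<in> A" using polyringE[OF ha] by blast
    obtain q where q: "b = poly q x" "\<And>i. coeff q i \<in> A" using polyringE[OF hb] by blast
    have "poly (p + q) x \<in> polyring A x" "poly (p - q) x \<in> polyring A x"
      by (rule polyringI, simp add: p q subringD[OF A])+
    moreover have "poly (p * q) x \<in> polyring A x"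
      by (rule polyringI) (simp add: p q coeff_mult_in[OF A])
    ultimately show ?thesis by (simp add: p q)
  qed
  ultimately show ?thesis unfolding subring_def by simp
qed

lemma const_in_polyring: "subring A \<Longrightarrow> a \<in> A \<Longrightarrow> a \<in> polyring A x"
  unfolding polyring_def
  by (rule CollectI, rule exI[of _ "[:a:]"]) (auto simp: coeff_pCons subringD split: nat.split)

lemma var_in_polyring: "subring A \<Longrightarrow> x \<in> polyring A x"
  unfolding polyring_def
  by (rule CollectI, rule exI[of _ "monom 1 1"]) (auto simp: coeff_monom subringD poly_monom)

lemma polyring_mono: "A \<subseteq> B \<Longrightarrow> polyring A x \<subseteq> polyring B x"
  unfolding polyring_def by blast

text \<open>Over a field L over which x is transcendental, a polynomial expression in x
  determines its coefficients; this replaces "comparing coefficients" throughout.\<close>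

lemma transc_unique:
  assumes L: "subring L" and t: "transc_over L x"
    and p: "\<And>i. coeff p i \<in> L" and q: "\<And>i. coeff q i \<in> L" and e: "poly p x = poly q x"
  shows "p = q"
proof -
  have "poly (p - q) x = 0" using e by simp
  moreover have "\<forall>i. coeff (p - q) i \<in> L" using p q by (simp add: subringD[OF L])
  ultimately have "p - q = 0" using t unfolding transc_over_def by blast
  then show ?thesis by simp
qed

lemma polyring_contract:
  assumes A: "subring A" and t: "transc_over (qf A) x" and QA: "Q \<subseteq> A" and Q0: "0 \<in> Q"
  shows "polyring Q x \<inter> A = Q"
proof
  show "polyring Q x \<inter> A \<subseteq> Q"
  proof
    fix c assume "c \<in> polyring Q x \<inter> A"
    then obtain q where q: "c = poly q x" "\<And>i. coeff q i \<in> Q" "c \<in> A" unfolding polyring_def by blast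
    have "q = [:c:]"
      by (rule transc_unique[OF qf_subring[OF A] t])
        (use q QA qf_subset[OF A] subringD(1)[OF qf_subring[OF A]]
          in \<open>auto simp: coeff_pCons split: nat.split\<close>)
    then show "c \<in> Q" using q(2)[of 0] by simp
  qed
  show "Q \<subseteq> polyring Q x \<inter> A"
  proof
    fix c assume c: "c \<in> Q"
    have "poly [:c:] x \<in> polyring Q x" by (rule polyringI) (use Q0 c in \<open>simp add: coeff_pCons split: nat.split\<close>)
    then show "c \<in> polyring Q x \<inter> A" using c QA by auto
  qed
qed

section \<open>Modules and generated submodules\<close>

lemma is_moduleD:
  assumes "is_module R N"
  shows "0 \<in> N" "a \<in> N \<Longrightarrow> b \<in> N \<Longrightarrow> a + b \<in> N" "r \<in> R \<Longrightarrow> m \<in> N \<Longrightarrow> r * m \<in> N"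
  using assms unfolding is_module_def by auto

lemma module_sum: "is_module R N \<Longrightarrow> (\<And>i. i \<in> I \<Longrightarrow> f i \<in> N) \<Longrightarrow> sum f I \<in> N"
  by (induction I rule: infinite_finite_induct) (simp_all add: is_moduleD)

lemma module_diff:
  assumes N: "is_module R N" and R: "subring R" and ab: "a \<in> N" "b \<in> N"
  shows "a - b \<in> N"
proof -
  have "- b \<in> N"
    using is_moduleD(3)[OF N _ ab(2), of "- 1"] subringD(4)[OF R subringD(1,2)[OF R]] by simp
  then show ?thesis using is_moduleD(2)[OF N ab(1)] by (simp only: diff_conv_add_uminus)
qed

lemma module_self: "subring A \<Longrightarrow> is_module A A"
  unfolding is_module_def by (auto simp: subringD)

lemma module_of_subring: "subring W \<Longrightarrow> R \<subseteq> W \<Longrightarrow> is_module R W"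
  unfolding is_module_def by (auto simp: subringD)

lemma module_mono_ring: "is_module R N \<Longrightarrow> R' \<subseteq> R \<Longrightarrow> is_module R' N"
  unfolding is_module_def by blast

lemma module_Int: "is_module R A \<Longrightarrow> is_module R B \<Longrightarrow> is_module R (A \<inter> B)"
  unfolding is_module_def by blast

lemma module_Inter:
  "is_module R A \<Longrightarrow> (\<And>N. N \<in> F \<Longrightarrow> is_module R N) \<Longrightarrow> is_module R (A \<inter> \<Inter>F)"
  unfolding is_module_def by blast

lemma genmod_least:
  assumes N: "is_module R N" and E: "E \<subseteq> N" shows "genmod R E \<subseteq> N"
proof
  fix y assume "y \<in> genmod R E"
  then obtain S c where y: "y = (\<Sum>s\<in>S. c s * s)" "S \<subseteq> E" "\<forall>s. c s \<in> R"
    unfolding genmod_def by blast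
  show "y \<in> N" unfolding y(1) using y E by (intro module_sum[OF N] is_moduleD(3)[OF N]) auto
qed

lemma genmod_module:
  assumes R: "subring R" shows "is_module R (genmod R E)"
  unfolding is_module_def
proof (intro conjI ballI)
  show "0 \<in> genmod R E" unfolding genmod_def
    by (rule CollectI, rule exI[of _ "{}"], rule exI[of _ "\<lambda>_. 0"]) (simp add: subringD[OF R])
next
  fix a b assume "a \<in> genmod R E" "b \<in> genmod R E"
  then obtain S1 c1 S2 c2 where a: "a = (\<Sum>s\<in>S1. c1 s * s)" "finite S1" "S1 \<subseteq> E" "\<forall>s. c1 s \<in> R"
    and b: "b = (\<Sum>s\<in>S2. c2 s * s)" "finite S2" "S2 \<subseteq> E" "\<forall>s. c2 s \<in> R"
    unfolding genmod_def by blast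
  define c where "c s = (if s \<in> S1 then c1 s else 0) + (if s \<in> S2 then c2 s else 0)" for s
  have "(\<Sum>s\<in>S1 \<union> S2. c s * s) = (\<Sum>s\<in>S1 \<union> S2. (if s \<in> S1 then c1 s * s else 0))
      + (\<Sum>s\<in>S1 \<union> S2. (if s \<in> S2 then c2 s * s else 0))"
    unfolding sum.distrib[symmetric] by (rule sum.cong) (auto simp: c_def distrib_right)
  also have "\<dots> = a + b"
    using a b by (simp add: sum.If_cases Int_absorb1 Int_absorb2)
  finally have "a + b = (\<Sum>s\<in>S1 \<union> S2. c s * s)" by simp
  moreover have "\<forall>s. c s \<in> R" unfolding c_def using a b by (simp add: subringD[OF R])
  ultimately show "a + b \<in> genmod R E" unfolding genmod_def using a b by blast
next
  fix r a assume r: "r \<in> R" and "a \<in> genmod R E"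
  then obtain S c where a: "a = (\<Sum>s\<in>S. c s * s)" "finite S" "S \<subseteq> E" "\<forall>s. c s \<in> R"
    unfolding genmod_def by blast
  have "r * a = (\<Sum>s\<in>S. (r * c s) * s)" unfolding a by (simp add: sum_distrib_left mult.assoc)
  moreover have "\<forall>s. r * c s \<in> R" using a r by (simp add: subringD[OF R])
  ultimately show "r * a \<in> genmod R E" unfolding genmod_def using a
    by (intro CollectI exI[of _ S] exI[of _ "\<lambda>s. r * c s"]) simp
qed

lemma genmod_sub:
  assumes R: "subring R" shows "E \<subseteq> genmod R E"
proof
  fix e assume "e \<in> E"
  then show "e \<in> genmod R E" unfolding genmod_def
    by (intro CollectI exI[of _ "{e}"] exI[of _ "\<lambda>_. 1"]) (simp add: subringD[OF R])
qed

lemma genmod_mono: "E \<subseteq> F \<Longrightarrow> genmod R E \<subseteq> genmod R F"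
  unfolding genmod_def by blast

lemma genmod_mono_ring: "R \<subseteq> R' \<Longrightarrow> genmod R E \<subseteq> genmod R' E"
  unfolding genmod_def by blast

lemma genmod_idem: "subring R \<Longrightarrow> is_module R N \<Longrightarrow> genmod R N = N"
  using genmod_least[of R N N] genmod_sub[of R N] by blast

lemma genmod_tower:
  assumes R: "subring R" and A: "subring A" and AR: "A \<subseteq> R"
  shows "genmod R (genmod A E) = genmod R E"
proof
  have GR: "is_module R (genmod R E)" by (rule genmod_module[OF R])
  have "genmod A E \<subseteq> genmod R E"
    by (rule genmod_least[OF module_mono_ring[OF GR AR] genmod_sub[OF R]])
  then show "genmod R (genmod A E) \<subseteq> genmod R E" by (rule genmod_least[OF GR])
  show "genmod R E \<subseteq> genmod R (genmod A E)" by (rule genmod_mono[OF genmod_sub[OF A]])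
qed

section \<open>Extension of modules to polynomial rings\<close>

lemma poly_in_genmod_polyring:
  assumes A: "subring A" and c: "\<And>k. coeff p k \<in> M"
  shows "poly p x \<in> genmod (polyring A x) M"
proof -
  have Ax: "subring (polyring A x)" by (rule polyring_subring[OF A])
  have G: "is_module (polyring A x) (genmod (polyring A x) M)" by (rule genmod_module[OF Ax])
  have "x ^ i * coeff p i \<in> genmod (polyring A x) M" for i
    using is_moduleD(3)[OF G subring_power[OF Ax var_in_polyring[OF A]]] genmod_sub[OF Ax] c
    by blast
  then have "(\<Sum>i\<le>degree p. x ^ i * coeff p i) \<in> genmod (polyring A x) M"
    by (rule module_sum[OF G])
  then show ?thesis by (simp add: poly_altdef mult.commute)
qed

lemma genmod_polyring_char:
  assumes A: "subring A" and M: "is_module A M"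
  shows "genmod (polyring A x) M = {poly \<eta> x | \<eta>. \<forall>k. coeff \<eta> k \<in> M}"
proof
  show "{poly \<eta> x | \<eta>. \<forall>k. coeff \<eta> k \<in> M} \<subseteq> genmod (polyring A x) M"
    using poly_in_genmod_polyring[OF A] by blast
  show "genmod (polyring A x) M \<subseteq> {poly \<eta> x | \<eta>. \<forall>k. coeff \<eta> k \<in> M}"
  proof (rule genmod_least)
    show "M \<subseteq> {poly \<eta> x | \<eta>. \<forall>k. coeff \<eta> k \<in> M}"
    proof
      fix m assume "m \<in> M"
      then show "m \<in> {poly \<eta> x | \<eta>. \<forall>k. coeff \<eta> k \<in> M}"
        using is_moduleD(1)[OF M] by (intro CollectI exI[of _ "[:m:]"]) (simp add: coeff_pCons split: nat.split)
    qed
    show "is_module (polyring A x) {poly \<eta> x | \<eta>. \<forall>k. coeff \<eta> k \<in> M}"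
      unfolding is_module_def
    proof (intro conjI ballI)
      show "0 \<in> {poly \<eta> x | \<eta>. \<forall>k. coeff \<eta> k \<in> M}"
        using is_moduleD(1)[OF M] by (intro CollectI exI[of _ 0]) simp
    next
      fix a b assume "a \<in> {poly \<eta> x | \<eta>. \<forall>k. coeff \<eta> k \<in> M}" "b \<in> {poly \<eta> x | \<eta>. \<forall>k. coeff \<eta> k \<in> M}"
      then obtain p q where "a = poly p x" "\<forall>k. coeff p k \<in> M" "b = poly q x" "\<forall>k. coeff q k \<in> M" by blast
      then show "a + b \<in> {poly \<eta> x | \<eta>. \<forall>k. coeff \<eta> k \<in> M}"
        using is_moduleD(2)[OF M] by (intro CollectI exI[of _ "p + q"]) simp
    next
      fix r b assume "r \<in> polyring A x" "b \<in> {poly \<eta> x | \<eta>. \<forall>k. coeff \<eta> k \<in> M}"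
      then obtain p q where pq: "r = poly p x" "\<And>k. coeff p k \<in> A" "b = poly q x" "\<And>k. coeff q k \<in> M"
        unfolding polyring_def by blast
      have "coeff (p * q) n \<in> M" for n
        unfolding coeff_mult using pq by (intro module_sum[OF M] is_moduleD(3)[OF M]) auto
      then show "r * b \<in> {poly \<eta> x | \<eta>. \<forall>k. coeff \<eta> k \<in> M}"
        using pq by (intro CollectI exI[of _ "p * q"]) simp
    qed
  qed
qed

lemma genmod_polyring_coeff:
  assumes A: "subring A" and t: "transc_over (qf A) x"
    and M: "is_module A M" "M \<subseteq> qf A"
    and p: "\<And>k. coeff p k \<in> qf A" and mem: "poly p x \<in> genmod (polyring A x) M"
  shows "coeff p k \<in> M"
proof -
  obtain \<eta> where \<eta>: "poly p x = poly \<eta> x" "\<forall>k. coeff \<eta> k \<in> M"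
    using mem genmod_polyring_char[OF A M(1)] by auto
  have "p = \<eta>" by (rule transc_unique[OF qf_subring[OF A] t]) (use p \<eta> M(2) in auto)
  then show ?thesis using \<eta>(2) by simp
qed

lemma genmod_polyring_contract:
  assumes A: "subring A" and t: "transc_over (qf A) x" and M: "is_module A M" "M \<subseteq> qf A"
  shows "genmod (polyring A x) M \<inter> qf A = M"
proof
  show "genmod (polyring A x) M \<inter> qf A \<subseteq> M"
  proof
    fix c assume c: "c \<in> genmod (polyring A x) M \<inter> qf A"
    have "coeff [:c:] 0 \<in> M"
      by (rule genmod_polyring_coeff[OF A t M])
        (use c subringD(1)[OF qf_subring[OF A]] in \<open>auto simp: coeff_pCons split: nat.split\<close>)
    then show "c \<in> M" by simp
  qed
  show "M \<subseteq> genmod (polyring A x) M \<inter> qf A"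
    using genmod_sub[OF polyring_subring[OF A]] M(2) by blast
qed


section \<open>Localization\<close>

definition multclosed :: "'a::field set \<Rightarrow> 'a set \<Rightarrow> bool" where
  "multclosed A T \<longleftrightarrow> T \<subseteq> A \<and> 1 \<in> T \<and> 0 \<notin> T \<and> (\<forall>s\<in>T. \<forall>t\<in>T. s * t \<in> T)"

definition locset :: "'a::field set \<Rightarrow> 'a set \<Rightarrow> 'a set" where
  "locset A T = {a / t | a t. a \<in> A \<and> t \<in> T}"

lemma locset_subring:
  assumes A: "subring A" and T: "multclosed A T" shows "subring (locset A T)"
  unfolding subring_def
proof (intro conjI ballI)
  have T1: "1 \<in> T" using T unfolding multclosed_def by blast
  have "(0::'a) = 0 / 1" "(1::'a) = 1 / 1" by simp_all
  then show "0 \<in> locset A T" "1 \<in> locset A T" unfolding locset_def using T1 subringD(1,2)[OF A] by blast+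
next
  fix x y assume "x \<in> locset A T" "y \<in> locset A T"
  then obtain a s b t where x: "x = a / s" "a \<in> A" "s \<in> T" and y: "y = b / t" "b \<in> A" "t \<in> T"
    unfolding locset_def by blast
  have st: "s * t \<in> T" "s \<noteq> 0" "t \<noteq> 0" using T x y unfolding multclosed_def by auto
  have sA: "s \<in> A" "t \<in> A" using T x y unfolding multclosed_def by auto
  have "x + y = (a * t + b * s) / (s * t)" "x - y = (a * t - b * s) / (s * t)"
    "x * y = (a * b) / (s * t)" using st x y by (simp_all add: field_simps)
  moreover have "a * t + b * s \<in> A" "a * t - b * s \<in> A" "a * b \<in> A"
    using x y sA A by (simp_all add: subringD)
  ultimately show "x + y \<in> locset A T" "x - y \<in> locset A T" "x * y \<in> locset A T"
    unfolding locset_def using st by blast+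
qed

lemma locset_sub: "multclosed A T \<Longrightarrow> A \<subseteq> locset A T"
  unfolding locset_def multclosed_def by (force intro: exI[of _ 1])

lemma locset_inv: "multclosed A T \<Longrightarrow> subring A \<Longrightarrow> t \<in> T \<Longrightarrow> 1 / t \<in> locset A T"
  unfolding locset_def using subringD(2) by blast

lemma locset_saturation_module:
  assumes A: "subring A" and T: "multclosed A T" and M: "is_module A M"
  shows "genmod (locset A T) M \<subseteq> {y. \<exists>t\<in>T. t * y \<in> M}"
proof (rule genmod_least)
  have T1: "1 \<in> T" and TA: "T \<subseteq> A" and T0: "0 \<notin> T"
    and Tm: "\<And>s t. s \<in> T \<Longrightarrow> t \<in> T \<Longrightarrow> s * t \<in> T"
    using T unfolding multclosed_def by auto
  show "M \<subseteq> {y. \<exists>t\<in>T. t * y \<in> M}" using T1 by force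
  show "is_module (locset A T) {y. \<exists>t\<in>T. t * y \<in> M}"
    unfolding is_module_def
  proof (intro conjI ballI)
    show "0 \<in> {y. \<exists>t\<in>T. t * y \<in> M}" using T1 is_moduleD(1)[OF M] by force
  next
    fix x y assume "x \<in> {y. \<exists>t\<in>T. t * y \<in> M}" "y \<in> {y. \<exists>t\<in>T. t * y \<in> M}"
    then obtain s t where s: "s \<in> T" "s * x \<in> M" and t: "t \<in> T" "t * y \<in> M" by blast
    have "(s * t) * (x + y) = t * (s * x) + s * (t * y)" by (simp add: algebra_simps)
    moreover have "\<dots> \<in> M" using s t TA
      by (intro is_moduleD(2)[OF M is_moduleD(3)[OF M _ s(2)] is_moduleD(3)[OF M _ t(2)]]) auto
    ultimately have "(s * t) * (x + y) \<in> M" by simp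
    then show "x + y \<in> {y. \<exists>t\<in>T. t * y \<in> M}" using Tm[OF s(1) t(1)] by blast
  next
    fix r y assume "r \<in> locset A T" "y \<in> {y. \<exists>t\<in>T. t * y \<in> M}"
    then obtain a s t where r: "r = a / s" "a \<in> A" "s \<in> T" and t: "t \<in> T" "t * y \<in> M"
      unfolding locset_def by blast
    have "s \<noteq> 0" using T0 r by auto
    then have sr: "s * r = a" using r(1) by simp
    have "(s * t) * (r * y) = (s * r) * (t * y)" by (simp only: ac_simps)
    then have eq: "(s * t) * (r * y) = a * (t * y)" by (simp only: sr)
    have "(s * t) * (r * y) \<in> M" unfolding eq by (rule is_moduleD(3)[OF M r(2) t(2)])
    then show "r * y \<in> {y. \<exists>t\<in>T. t * y \<in> M}" using Tm[OF r(3) t(1)] by blast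
  qed
qed

lemma genmod_locset_iff:
  assumes A: "subring A" and T: "multclosed A T"
  shows "y \<in> genmod (locset A T) E \<longleftrightarrow> (\<exists>t\<in>T. t * y \<in> genmod A E)"
proof
  assume "y \<in> genmod (locset A T) E"
  then have "y \<in> genmod (locset A T) (genmod A E)" using genmod_mono[OF genmod_sub[OF A]] by blast
  then show "\<exists>t\<in>T. t * y \<in> genmod A E"
    using locset_saturation_module[OF A T genmod_module[OF A]] by blast
next
  assume "\<exists>t\<in>T. t * y \<in> genmod A E"
  then obtain t where t: "t \<in> T" "t * y \<in> genmod A E" by blast
  have L: "subring (locset A T)" by (rule locset_subring[OF A T])
  have "t * y \<in> genmod (locset A T) E" using t(2) genmod_mono_ring[OF locset_sub[OF T]] by blast
  then have "(1 / t) * (t * y) \<in> genmod (locset A T) E"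
    by (rule is_moduleD(3)[OF genmod_module[OF L] locset_inv[OF T A t(1)]])
  moreover have "t \<noteq> 0" using T t(1) unfolding multclosed_def by blast
  ultimately show "y \<in> genmod (locset A T) E" by simp
qed

lemma prime_idealD:
  assumes "prime_ideal_of A Q"
  shows "Q \<subseteq> A" "is_module A Q" "Q \<noteq> A" "a \<in> A \<Longrightarrow> b \<in> A \<Longrightarrow> a * b \<in> Q \<Longrightarrow> a \<in> Q \<or> b \<in> Q"
  using assms unfolding prime_ideal_of_def ideal_of_def by auto

lemma ideal_one_notin:
  assumes A: "subring A" and Q: "Q \<subseteq> A" "is_module A Q" "Q \<noteq> A" shows "1 \<notin> Q"
proof
  assume "1 \<in> Q"
  then have "a \<in> Q" if "a \<in> A" for a using is_moduleD(3)[OF Q(2) that, of 1] by simp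
  then show False using Q by blast
qed

lemma prime_compl_multclosed:
  assumes D: "subring D" and P: "prime_ideal_of D P"
  shows "multclosed D (D - P)"
proof -
  note PD = prime_idealD[OF P]
  have "1 \<notin> P" by (rule ideal_one_notin[OF D PD(1-3)])
  moreover have "0 \<in> P" using is_moduleD(1)[OF PD(2)] .
  moreover have "s * t \<in> D - P" if "s \<in> D - P" "t \<in> D - P" for s t
    using that PD(4) subringD(5)[OF D] by blast
  ultimately show ?thesis unfolding multclosed_def using subringD(2)[OF D] by blast
qed

lemma loc_eq: "loc D P = locset D (D - P)"
  unfolding loc_def locset_def by simp

lemma coeffs_vanish_degree:
  assumes "\<And>i. i \<ge> m \<Longrightarrow> coeff p i = 0"
  shows "p = 0 \<or> degree p < m"
proof (cases m)
  case 0 then have "p = 0" using assms by (intro poly_eqI) simp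
  then show ?thesis by simp
next
  case (Suc k)
  have "degree p \<le> k" using assms Suc by (intro degree_le) auto
  then show ?thesis using Suc by simp
qed

text \<open>If f g has coefficients in M
  and every product g_j' f_i with j' > j lies in M, then so does g_j \<cdot> lead_coeff f
  (it is the only remaining term of the coefficient of degree deg f + j).\<close>

lemma product_top_coeff:
  assumes L: "subring L" and M: "is_module L M" and g: "\<And>j. coeff g j \<in> L"
    and fg: "\<And>n. coeff (f * g) n \<in> M"
    and above: "\<And>j' i. j < j' \<Longrightarrow> coeff g j' * coeff f i \<in> M"
  shows "coeff g j * lead_coeff f \<in> M"
proof -
  define m where "m = degree f"
  have split: "coeff (f * g) (m + j) = coeff f m * coeff g (m + j - m)
      + (\<Sum>k\<in>{..m+j} - {m}. coeff f k * coeff g (m + j - k))"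
    unfolding coeff_mult by (rule sum.remove) auto
  have rest: "(\<Sum>k\<in>{..m+j} - {m}. coeff f k * coeff g (m + j - k)) \<in> M"
  proof (rule module_sum[OF M])
    fix k assume k: "k \<in> {..m+j} - {m}"
    show "coeff f k * coeff g (m + j - k) \<in> M"
    proof (cases "k < m")
      case True
      then show ?thesis using above[of "m + j - k" k] by (simp add: mult.commute)
    next
      case False
      then have "coeff f k = 0" using k unfolding m_def by (auto intro: coeff_eq_0)
      then show ?thesis using is_moduleD(1)[OF M] by simp
    qed
  qed
  show ?thesis using module_diff[OF M L fg[of "m + j"] rest] split
    unfolding m_def by (simp add: mult.commute)
qed

lemma drop_leading_term:
  assumes L: "subring L" and M: "is_module L M" and g: "\<And>j. coeff g j \<in> L"
    and fg: "\<And>n. coeff (f * g) n \<in> M"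
    and above: "\<And>j' i. j < j' \<Longrightarrow> coeff g j' * coeff f i \<in> M"
  defines "f2 \<equiv> smult (coeff g j) f - monom (coeff g j * lead_coeff f) (degree f)"
  shows "coeff g j * lead_coeff f \<in> M" "\<And>n. coeff (f2 * g) n \<in> M" "f2 = 0 \<or> degree f2 < degree f"
proof -
  define a where "a = coeff g j * lead_coeff f"
  show aM: "coeff g j * lead_coeff f \<in> M" by (rule product_top_coeff[OF L M g fg above])
  show "coeff (f2 * g) n \<in> M" for n
  proof -
    have "a * coeff g k \<in> M" for k
      using is_moduleD(3)[OF M g aM] unfolding a_def by (simp add: mult.commute)
    then have "coeff (monom a (degree f) * g) n \<in> M"
      using is_moduleD(1)[OF M] by (simp add: coeff_monom_mult)
    moreover have "coeff g j * coeff (f * g) n \<in> M" using is_moduleD(3)[OF M g fg] .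
    ultimately show ?thesis unfolding f2_def a_def[symmetric]
      using module_diff[OF M L] by (simp add: left_diff_distrib)
  qed
  have "coeff f2 i = 0" if "i \<ge> degree f" for i
    using that coeff_eq_0[of f i] unfolding f2_def
    by (cases "i = degree f") (simp_all add: coeff_monom)
  then show "f2 = 0 \<or> degree f2 < degree f" by (rule coeffs_vanish_degree)
qed

text \<open>Induction on deg f, removing the leading term of f
  after multiplying by the last coefficient g_j of g that does not annihilate f mod M.\<close>

lemma unit_coeff_cancel:
  assumes L: "subring L" and M: "is_module L M" and g: "\<And>j. coeff g j \<in> L"
    and unit: "1 / coeff g j0 \<in> L" "coeff g j0 \<noteq> 0"
  shows "(\<And>n. coeff (f * g) n \<in> M) \<Longrightarrow> coeff f i \<in> M"
proof (induction "degree f" arbitrary: f i rule: less_induct)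
  case less
  show ?case
  proof (cases "\<forall>j i. coeff g j * coeff f i \<in> M")
    case True
    then have "(1 / coeff g j0) * (coeff g j0 * coeff f i) \<in> M"
      using is_moduleD(3)[OF M unit(1)] by blast
    then show ?thesis using unit(2) by simp
  next
    case False
    define J where "J = {j. \<exists>i. coeff g j * coeff f i \<notin> M}"
    have "J \<subseteq> {..degree g}"
      unfolding J_def using is_moduleD(1)[OF M] by (auto intro: le_degree)
    then have finJ: "finite J" using finite_subset by blast
    define j where "j = Max J"
    have jJ: "j \<in> J" unfolding j_def using finJ False J_def by (intro Max_in) auto
    have above: "coeff g j' * coeff f i \<in> M" if "j < j'" for j' i
      using that finJ Max_ge[of J j'] unfolding j_def J_def by fastforce
    define a where "a = coeff g j * lead_coeff f"
    define f2 where "f2 = smult (coeff g j) f - monom a (degree f)"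
    note drop = drop_leading_term[where j = j, OF L M g less.prems above, folded a_def, folded f2_def]
    have f2M: "coeff f2 i \<in> M" for i
      using less.hyps drop(2,3) is_moduleD(1)[OF M] by fastforce
    have "coeff g j * coeff f i \<in> M" for i
      using f2M[of i] drop(1) unfolding f2_def a_def by (cases "i = degree f") (simp_all add: coeff_monom)
    then show ?thesis using jJ unfolding J_def by blast
  qed
qed

lemma pseudo_division_step:
  assumes A: "subring A" and g: "\<And>i. coeff g i \<in> A" and f: "\<And>i. coeff f i \<in> A"
    and dg: "degree g \<le> degree f"
  defines "f' \<equiv> smult (lead_coeff g) f - monom (lead_coeff f) (degree f - degree g) * g"
  shows "\<And>i. coeff f' i \<in> A" "f' = 0 \<or> degree f' < degree f"
proof -
  define c where "c = lead_coeff g"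
  define n where "n = degree f - degree g"
  define b where "b = lead_coeff f"
  have cA: "c \<in> A" "b \<in> A" unfolding c_def b_def using g f by auto
  have monA: "coeff (monom b n) i \<in> A" for i using cA subringD(1)[OF A] by (simp add: coeff_monom)
  show "coeff f' i \<in> A" for i
    unfolding f'_def using subringD[OF A] f cA coeff_mult_in[OF A monA g] by (simp add: c_def b_def n_def)
  have "coeff f' i = 0" if "i \<ge> degree f" for i
  proof (cases "i = degree f")
    case True
    then have "i - n = degree g" "\<not> i < n" unfolding n_def using dg by auto
    then have "coeff (monom b n * g) i = b * c" unfolding c_def by (simp add: coeff_monom_mult)
    then show ?thesis unfolding f'_def c_def b_def n_def using True by (simp add: mult.commute)
  next
    case False
    then have "i > degree f" "i - n > degree g" using that dg unfolding n_def by auto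
    then show ?thesis unfolding f'_def n_def by (simp add: coeff_monom_mult coeff_eq_0)
  qed
  then show "f' = 0 \<or> degree f' < degree f" by (rule coeffs_vanish_degree)
qed

lemma pseudo_division:
  assumes A: "subring A" and g: "\<And>i. coeff g i \<in> A" and g0: "g \<noteq> 0"
  shows "(\<And>i. coeff f i \<in> A) \<Longrightarrow> \<exists>k q r. smult (lead_coeff g ^ k) f = q * g + r
      \<and> (r = 0 \<or> degree r < degree g) \<and> (\<forall>i. coeff q i \<in> A) \<and> (\<forall>i. coeff r i \<in> A)"
proof (induction "degree f" arbitrary: f rule: less_induct)
  case less
  show ?case
  proof (cases "f = 0 \<or> degree f < degree g")
    case True
    show ?thesis
      by (rule exI[of _ 0], rule exI[of _ 0], rule exI[of _ f]) (use True less.prems subringD(1)[OF A] in auto)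
  next
    case False
    define c where "c = lead_coeff g"
    define m where "m = monom (lead_coeff f) (degree f - degree g)"
    define f' where "f' = smult c f - m * g"
    have dg: "degree g \<le> degree f" using False by auto
    note step = pseudo_division_step[OF A g less.prems dg, folded c_def m_def, folded f'_def]
    have cA: "c \<in> A" unfolding c_def using g by blast
    have mA: "coeff m i \<in> A" for i using less.prems subringD(1)[OF A] by (simp add: m_def coeff_monom)
    have "\<exists>k q r. smult (c ^ k) f' = q * g + r \<and> (r = 0 \<or> degree r < degree g)
        \<and> (\<forall>i. coeff q i \<in> A) \<and> (\<forall>i. coeff r i \<in> A)"
    proof (cases "f' = 0")
      case True
      then show ?thesis using subringD(1)[OF A] by (intro exI[of _ 0]) simp
    next
      case False
      then have "degree f' < degree f" using step(2) by blast
      from less.hyps[OF this step(1)] show ?thesis unfolding c_def .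
    qed
    then obtain k q r where kqr: "smult (c ^ k) f' = q * g + r" "r = 0 \<or> degree r < degree g"
      "\<forall>i. coeff q i \<in> A" "\<forall>i. coeff r i \<in> A" by blast
    have "smult (c ^ Suc k) f = smult (c ^ k) (m * g + f')" unfolding f'_def by (simp add: mult.commute)
    also have "\<dots> = (smult (c ^ k) m + q) * g + r"
      using kqr(1) by (simp add: smult_add_right algebra_simps)
    finally have "smult (c ^ Suc k) f = (smult (c ^ k) m + q) * g + r" .
    moreover have "\<forall>i. coeff (smult (c ^ k) m + q) i \<in> A"
      using kqr(3) mA subring_power[OF A cA] subringD[OF A] by simp
    ultimately show ?thesis using kqr unfolding c_def by blast
  qed
qed


section \<open>Semistar operations and the finite-type operation star_f\<close>

lemma semistarD:
  assumes "semistar D st"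
  shows "E \<in> Fbar D \<Longrightarrow> st E \<in> Fbar D"
    "x \<in> qf D \<Longrightarrow> E \<in> Fbar D \<Longrightarrow> x \<noteq> 0 \<Longrightarrow> st ((\<lambda>e. x * e) ` E) = (\<lambda>e. x * e) ` st E"
    "E \<in> Fbar D \<Longrightarrow> F \<in> Fbar D \<Longrightarrow> E \<subseteq> F \<Longrightarrow> st E \<subseteq> st F"
    "E \<in> Fbar D \<Longrightarrow> E \<subseteq> st E"
    "E \<in> Fbar D \<Longrightarrow> st (st E) = st E"
proof -
  note h = assms[unfolded semistar_def]
  show "E \<in> Fbar D \<Longrightarrow> st E \<in> Fbar D" using conjunct1[OF h] by (rule bspec)
  show "x \<in> qf D \<Longrightarrow> E \<in> Fbar D \<Longrightarrow> x \<noteq> 0 \<Longrightarrow> st ((\<lambda>e. x * e) ` E) = (\<lambda>e. x * e) ` st E"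
    using conjunct1[OF conjunct2[OF h]] by simp
  show "E \<in> Fbar D \<Longrightarrow> F \<in> Fbar D \<Longrightarrow> E \<subseteq> F \<Longrightarrow> st E \<subseteq> st F"
    using conjunct1[OF conjunct2[OF conjunct2[OF h]]] by simp
  show "E \<in> Fbar D \<Longrightarrow> E \<subseteq> st E"
    using conjunct1[OF conjunct2[OF conjunct2[OF conjunct2[OF h]]]] by simp
  show "E \<in> Fbar D \<Longrightarrow> st (st E) = st E"
    using conjunct2[OF conjunct2[OF conjunct2[OF conjunct2[OF h]]]] by simp
qed

lemma FbarD: "E \<in> Fbar D \<Longrightarrow> E \<subseteq> qf D" "E \<in> Fbar D \<Longrightarrow> is_module D E" "E \<in> Fbar D \<Longrightarrow> E \<noteq> {0}"
  unfolding Fbar_def by auto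

lemma D_Fbar: "subring D \<Longrightarrow> D \<in> Fbar D"
  unfolding Fbar_def using qf_subset[of D] module_self[of D] subringD(2)[of D] by auto

lemma genmod_sub_D: "subring D \<Longrightarrow> S \<subseteq> D \<Longrightarrow> genmod D S \<subseteq> D"
  using genmod_least[OF module_self] by blast

lemma genmod_Fbar:
  assumes D: "subring D" and S: "S \<subseteq> D" and s: "s \<in> S" "s \<noteq> 0"
  shows "genmod D S \<in> Fbar D"
proof -
  have "genmod D S \<subseteq> qf D" using genmod_sub_D[OF D S] qf_subset[OF D] by blast
  moreover have "genmod D S \<noteq> {0}" using genmod_sub[OF D, of S] s by blast
  ultimately show ?thesis unfolding Fbar_def using genmod_module[OF D] by blast
qed

lemma genmod_fg:
  assumes D: "subring D" and fin: "finite S" and S: "S \<subseteq> D" and s: "s \<in> S" "s \<noteq> 0"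
  shows "fg_frac D (genmod D S)"
proof -
  have "(\<lambda>f. 1 * f) ` genmod D S \<subseteq> D" using genmod_sub_D[OF D S] by simp
  moreover have "S \<subseteq> qf D" using S qf_subset[OF D] by blast
  ultimately show ?thesis unfolding fg_frac_def using genmod_Fbar[OF D S s] fin subringD(2)[OF D]
    by (intro conjI) (auto intro!: exI[of _ S] bexI[of _ 1])
qed

lemma genmod_zero_set: "\<forall>s\<in>S. s = 0 \<Longrightarrow> genmod R S \<subseteq> {0}"
  unfolding genmod_def by (auto intro!: sum.neutral)

lemma st_genmod_module:
  assumes D: "subring D" and st: "semistar D st" and S: "S \<subseteq> D" "s \<in> S" "s \<noteq> 0"
  shows "is_module D (st (genmod D S))"
  using FbarD(2)[OF semistarD(1)[OF st genmod_Fbar[OF D S]]] .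

lemma st_genmod_mono:
  assumes D: "subring D" and st: "semistar D st" and T: "T \<subseteq> D" "S \<subseteq> T" "s \<in> S" "s \<noteq> 0"
  shows "st (genmod D S) \<subseteq> st (genmod D T)"
proof -
  have "genmod D S \<in> Fbar D" using genmod_Fbar[OF D _ T(3,4)] T by blast
  moreover have "genmod D T \<in> Fbar D" using genmod_Fbar[OF D T(1), of s] T by blast
  ultimately show ?thesis using semistarD(3)[OF st] genmod_mono[OF T(2)] by blast
qed

lemma star_fI:
  assumes D: "subring D" and I: "I \<subseteq> D" "is_module D I"
    and S: "finite S" "S \<subseteq> I" "s \<in> S" "s \<noteq> 0" and x: "x \<in> st (genmod D S)"
  shows "x \<in> star_f D st I"
proof -
  have "fg_frac D (genmod D S)" using genmod_fg[OF D S(1) _ S(3,4)] S(2) I(1) by blast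
  moreover have "genmod D S \<subseteq> I" using genmod_least[OF I(2) S(2)] .
  ultimately show ?thesis unfolding star_f_def using x by blast
qed

lemma star_fE:
  assumes D: "subring D" and x: "x \<in> star_f D st I"
  obtains S s where "finite S" "S \<subseteq> I" "s \<in> S" "s \<noteq> 0" "x \<in> st (genmod D S)"
proof -
  obtain F where F: "F \<subseteq> I" "fg_frac D F" "x \<in> st F" using x unfolding star_f_def by blast
  then obtain S where S: "finite S" "F = genmod D S" "F \<noteq> {0}"
    unfolding fg_frac_def Fbar_def by blast
  have "S \<subseteq> I" using genmod_sub[OF D, of S] S F by blast
  moreover have "\<exists>s\<in>S. s \<noteq> 0"
    using S genmod_zero_set[of S D] is_moduleD(1)[OF genmod_module[OF D, of S]] by blast
  ultimately show thesis using that S F by blast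
qed

lemma ideal_sub_star_f:
  assumes D: "subring D" and st: "semistar D st" and I: "I \<subseteq> D" "is_module D I" "I \<noteq> {0}"
  shows "I \<subseteq> star_f D st I"
proof
  fix x assume x: "x \<in> I"
  obtain q where q: "q \<in> I" "q \<noteq> 0" using I(3) is_moduleD(1)[OF I(2)] by blast
  have F: "genmod D {x, q} \<in> Fbar D" using genmod_Fbar[OF D, of "{x,q}" q] q I x by blast
  have xq: "x \<in> st (genmod D {x, q})" using semistarD(4)[OF st F] genmod_sub[OF D, of "{x,q}"] by blast
  show "x \<in> star_f D st I" by (rule star_fI[OF D I(1,2), where st = st, OF _ _ _ _ xq]) (use x q in auto)
qed

lemma star_f_module:
  assumes D: "subring D" and st: "semistar D st" and I: "I \<subseteq> D" "is_module D I" "I \<noteq> {0}"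
  shows "is_module D (star_f D st I)"
  unfolding is_module_def
proof (intro conjI ballI)
  show "0 \<in> star_f D st I" using ideal_sub_star_f[OF D st I] is_moduleD(1)[OF I(2)] by blast
next
  fix x y assume x: "x \<in> star_f D st I" and y: "y \<in> star_f D st I"
  obtain Sx sx where Sx: "finite Sx" "Sx \<subseteq> I" "sx \<in> Sx" "sx \<noteq> 0" "x \<in> st (genmod D Sx)"
    using star_fE[OF D x] by blast
  obtain Sy sy where Sy: "finite Sy" "Sy \<subseteq> I" "sy \<in> Sy" "sy \<noteq> 0" "y \<in> st (genmod D Sy)"
    using star_fE[OF D y] by blast
  let ?T = "Sx \<union> Sy"
  have T: "?T \<subseteq> D" using Sx Sy I(1) by blast
  have "x \<in> st (genmod D ?T)" "y \<in> st (genmod D ?T)"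
    using st_genmod_mono[OF D st T, of Sx sx] st_genmod_mono[OF D st T, of Sy sy] Sx Sy by blast+
  then have xy: "x + y \<in> st (genmod D ?T)"
    using is_moduleD(2)[OF st_genmod_module[OF D st T, of sx]] Sx by blast
  show "x + y \<in> star_f D st I" by (rule star_fI[OF D I(1,2), where st = st, OF _ _ _ _ xy]) (use Sx Sy in auto)
next
  fix r x assume r: "r \<in> D" and x: "x \<in> star_f D st I"
  obtain S s where S: "finite S" "S \<subseteq> I" "s \<in> S" "s \<noteq> 0" "x \<in> st (genmod D S)"
    using star_fE[OF D x] by blast
  have "r * x \<in> st (genmod D S)"
    using is_moduleD(3)[OF st_genmod_module[OF D st _ S(3,4)] r S(5)] S(2) I(1) by blast
  then show "r * x \<in> star_f D st I" by (rule star_fI[OF D I(1,2) S(1-4)])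
qed

lemma star_f_finite_common:
  assumes D: "subring D" and st: "semistar D st" and I: "I \<subseteq> D"
    and S: "finite S" "S \<subseteq> star_f D st I" "s0 \<in> S"
  obtains T t where "finite T" "T \<subseteq> I" "t \<in> T" "t \<noteq> 0" "S \<subseteq> st (genmod D T)"
proof -
  have "\<forall>s\<in>S. \<exists>T. finite T \<and> T \<subseteq> I \<and> (\<exists>t\<in>T. t \<noteq> 0) \<and> s \<in> st (genmod D T)"
  proof
    fix s assume "s \<in> S"
    then have "s \<in> star_f D st I" using S(2) by blast
    then obtain T t where "finite T" "T \<subseteq> I" "t \<in> T" "t \<noteq> 0" "s \<in> st (genmod D T)"
      by (rule star_fE[OF D])
    then show "\<exists>T. finite T \<and> T \<subseteq> I \<and> (\<exists>t\<in>T. t \<noteq> 0) \<and> s \<in> st (genmod D T)"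
      by blast
  qed
  from bchoice[OF this] obtain Tf where Tf0: "\<forall>s\<in>S.
      finite (Tf s) \<and> Tf s \<subseteq> I \<and> (\<exists>t\<in>Tf s. t \<noteq> 0) \<and> s \<in> st (genmod D (Tf s))"
    by blast
  have Tf: "finite (Tf s) \<and> Tf s \<subseteq> I \<and> (\<exists>t\<in>Tf s. t \<noteq> 0) \<and> s \<in> st (genmod D (Tf s))"
    if "s \<in> S" for s using Tf0 that by (rule bspec)
  define T where "T = \<Union> (Tf ` S)"
  have Tfin: "finite T" unfolding T_def using S(1) Tf by (intro finite_UN_I) auto
  have TI: "T \<subseteq> I" and TD: "T \<subseteq> D" unfolding T_def using Tf I by blast+
  obtain t0 where t0: "t0 \<in> Tf s0" "t0 \<noteq> 0" using Tf[OF S(3)] by blast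
  then have t0: "t0 \<in> T" "t0 \<noteq> 0" unfolding T_def using S(3) by blast+
  have "S \<subseteq> st (genmod D T)"
  proof
    fix s assume s: "s \<in> S"
    obtain t where t: "t \<in> Tf s" "t \<noteq> 0" using Tf[OF s] by blast
    have "st (genmod D (Tf s)) \<subseteq> st (genmod D T)"
      by (rule st_genmod_mono[OF D st TD _ t]) (use s in \<open>auto simp: T_def\<close>)
    then show "s \<in> st (genmod D T)" using Tf[OF s] by blast
  qed
  then show thesis using that Tfin TI t0 by blast
qed

lemma star_f_contraction_sub:
  assumes D: "subring D" and st: "semistar D st" and I: "I \<subseteq> D" "is_module D I"
  shows "star_f D st (star_f D st I \<inter> D) \<subseteq> star_f D st I"
proof
  fix x assume x: "x \<in> star_f D st (star_f D st I \<inter> D)"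
  obtain S s0 where S: "finite S" "S \<subseteq> star_f D st I \<inter> D" "s0 \<in> S" "s0 \<noteq> 0"
    "x \<in> st (genmod D S)" using star_fE[OF D x] by blast
  obtain T t where T: "finite T" "T \<subseteq> I" "t \<in> T" "t \<noteq> 0" "S \<subseteq> st (genmod D T)"
    using star_f_finite_common[OF D st I(1) S(1) _ S(3)] S(2) by blast
  have TD: "T \<subseteq> D" using T(2) I(1) by blast
  have FT: "st (genmod D T) \<in> Fbar D" by (rule semistarD(1)[OF st genmod_Fbar[OF D TD T(3,4)]])
  have "genmod D S \<subseteq> st (genmod D T)" by (rule genmod_least[OF FbarD(2)[OF FT] T(5)])
  moreover have "genmod D S \<in> Fbar D" using genmod_Fbar[OF D _ S(3,4)] S(2) by blast
  ultimately have "st (genmod D S) \<subseteq> st (st (genmod D T))" using semistarD(3)[OF st _ FT] by blast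
  then have "x \<in> st (genmod D T)"
    using S(5) unfolding semistarD(5)[OF st genmod_Fbar[OF D TD T(3,4)]] by blast
  then show "x \<in> star_f D st I" by (rule star_fI[OF D I T(1-4)])
qed

lemma one_in_st_imp:
  assumes D: "subring D" and st: "semistar D st" and G: "G \<in> Fbar D" and one: "1 \<in> st G"
  shows "st D \<subseteq> st G"
proof -
  have "D \<subseteq> st G" using is_moduleD(3)[OF FbarD(2)[OF semistarD(1)[OF st G]] _ one] by auto
  then have "st D \<subseteq> st (st G)" using semistarD(3)[OF st D_Fbar[OF D] semistarD(1)[OF st G]] by blast
  then show ?thesis using semistarD(5)[OF st G] by simp
qed


section \<open>Conductor ideals and quasi-star_f-ideals\<close>

definition colon :: "'a::field set \<Rightarrow> 'a set \<Rightarrow> 'a \<Rightarrow> 'a set" where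
  "colon A M z = {a \<in> A. a * z \<in> M}"

lemma colon_ideal:
  assumes A: "subring A" and M: "is_module A M"
  shows "colon A M z \<subseteq> A" "is_module A (colon A M z)"
proof -
  show "colon A M z \<subseteq> A" unfolding colon_def by blast
  show "is_module A (colon A M z)" unfolding is_module_def colon_def
    using is_moduleD[OF M] subringD[OF A] by (auto simp: distrib_right mult.assoc)
qed

lemma quasiD:
  assumes "quasi_star_ideal D sf I"
  shows "I \<subseteq> D" "is_module D I" "I \<noteq> {0}" "sf I \<inter> D = I"
  using assms unfolding quasi_star_ideal_def ideal_of_def by auto

lemma QMaxD:
  assumes "P \<in> QMax D sf"
  shows "quasi_star_ideal D sf P" "P \<subseteq> D" "is_module D P" "P \<noteq> {0}" "sf P \<inter> D = P" "P \<noteq> D"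
    "\<And>Q. quasi_star_ideal D sf Q \<Longrightarrow> Q \<noteq> D \<Longrightarrow> P \<subseteq> Q \<Longrightarrow> Q = P"
  using assms unfolding QMax_def quasi_star_ideal_def ideal_of_def by auto

lemma image_scale_Fbar:
  assumes D: "subring D" and G: "G \<in> Fbar D" and a: "a \<in> qf D" "a \<noteq> 0"
  shows "(\<lambda>e. a * e) ` G \<in> Fbar D"
proof -
  have M: "is_module D G" using FbarD(2)[OF G] .
  have "(\<lambda>e. a * e) ` G \<subseteq> qf D" using FbarD(1)[OF G] a subringD(5)[OF qf_subring[OF D]] by blast
  moreover have "is_module D ((\<lambda>e. a * e) ` G)"
    unfolding is_module_def
  proof (intro conjI ballI)
    show "0 \<in> (\<lambda>e. a * e) ` G" using is_moduleD(1)[OF M] by (intro image_eqI[of _ _ 0]) auto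
  next
    fix x y assume "x \<in> (\<lambda>e. a * e) ` G" "y \<in> (\<lambda>e. a * e) ` G"
    then obtain u v where "x = a * u" "y = a * v" "u \<in> G" "v \<in> G" by blast
    then show "x + y \<in> (\<lambda>e. a * e) ` G" using is_moduleD(2)[OF M]
      by (intro image_eqI[of _ _ "u + v"]) (auto simp: distrib_left)
  next
    fix r x assume r: "r \<in> D" and "x \<in> (\<lambda>e. a * e) ` G"
    then obtain u where u: "x = a * u" "u \<in> G" by blast
    have "r * x = a * (r * u)" using u by (simp add: algebra_simps)
    then show "r * x \<in> (\<lambda>e. a * e) ` G" using is_moduleD(3)[OF M r u(2)] by blast
  qed
  moreover have "(\<lambda>e. a * e) ` G \<noteq> {0}"
  proof
    assume h: "(\<lambda>e. a * e) ` G = {0}"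
    obtain g where g: "g \<in> G" "g \<noteq> 0" using FbarD(3)[OF G] is_moduleD(1)[OF M] by blast
    have "a * g \<in> (\<lambda>e. a * e) ` G" using g(1) by (rule imageI)
    then show False using h g a by simp
  qed
  ultimately show ?thesis unfolding Fbar_def by blast
qed

lemma scale_genmod_sub:
  assumes D: "subring D"
  shows "(\<lambda>e. a * e) ` genmod D S \<subseteq> genmod D ((\<lambda>e. a * e) ` S)"
proof -
  let ?G = "genmod D ((\<lambda>e. a * e) ` S)"
  have M: "is_module D ?G" using genmod_module[OF D] .
  have "genmod D S \<subseteq> {y. a * y \<in> ?G}"
  proof (rule genmod_least)
    show "S \<subseteq> {y. a * y \<in> ?G}" using genmod_sub[OF D] by blast
    show "is_module D {y. a * y \<in> ?G}"
      unfolding is_module_def using is_moduleD[OF M] by (auto simp: distrib_left mult.left_commute)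
  qed
  then show ?thesis by blast
qed

lemma quasi_sub_colon:
  assumes P: "quasi_star_ideal D sf P" and a: "a \<in> D"
  shows "P \<subseteq> colon D P a"
proof
  fix x assume x: "x \<in> P"
  then have "a * x \<in> P" by (rule is_moduleD(3)[OF quasiD(2)[OF P] a])
  then show "x \<in> colon D P a" unfolding colon_def using x quasiD(1)[OF P] by (auto simp: mult.commute)
qed

lemma st_scale_sub:
  assumes D: "subring D" and st: "semistar D st" and a: "a \<in> D" "a \<noteq> 0"
    and S: "S \<subseteq> D" "s \<in> S" "s \<noteq> 0"
  shows "(\<lambda>e. a * e) ` st (genmod D S) \<subseteq> st (genmod D ((\<lambda>e. a * e) ` S))"
proof -
  let ?G = "genmod D S"
  have aq: "a \<in> qf D" using a qf_subset[OF D] by blast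
  have G: "?G \<in> Fbar D" by (rule genmod_Fbar[OF D S])
  have aS: "(\<lambda>e. a * e) ` S \<subseteq> D" using S(1) subringD(5)[OF D a(1)] by blast
  have "a * s \<in> (\<lambda>e. a * e) ` S" "a * s \<noteq> 0" using S(2,3) a(2) by auto
  then have G': "genmod D ((\<lambda>e. a * e) ` S) \<in> Fbar D" by (rule genmod_Fbar[OF D aS])
  have "st ((\<lambda>e. a * e) ` ?G) \<subseteq> st (genmod D ((\<lambda>e. a * e) ` S))"
    by (rule semistarD(3)[OF st image_scale_Fbar[OF D G aq a(2)] G' scale_genmod_sub[OF D]])
  then show ?thesis unfolding semistarD(2)[OF st aq G a(2)] .
qed

text \<open>Quasi-star_f-ideals are stable under conductors: (P :_D a) is again one when
  a \<in> D - P.  This is what makes the maximal ones prime.\<close>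

lemma colon_quasi_ideal:
  assumes D: "subring D" and st: "semistar D st" and P: "quasi_star_ideal D (star_f D st) P"
    and a: "a \<in> D" "a \<notin> P"
  shows "quasi_star_ideal D (star_f D st) (colon D P a)"
proof -
  note PD = quasiD[OF P]
  let ?Q = "colon D P a"
  have QD: "?Q \<subseteq> D" and QM: "is_module D ?Q" using colon_ideal[OF D PD(2)] by auto
  have PQ: "P \<subseteq> ?Q" by (rule quasi_sub_colon[OF P a(1)])
  have Q0: "?Q \<noteq> {0}" using PQ PD(3) is_moduleD(1)[OF PD(2)] by blast
  have a0: "a \<noteq> 0" using a is_moduleD(1)[OF PD(2)] by auto
  have "x \<in> ?Q" if x: "x \<in> star_f D st ?Q" "x \<in> D" for x
  proof -
    obtain S s where S: "finite S" "S \<subseteq> ?Q" "s \<in> S" "s \<noteq> 0" "x \<in> st (genmod D S)"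
      using star_fE[OF D x(1)] by blast
    define S' where "S' = (\<lambda>e. a * e) ` S"
    have S'P: "S' \<subseteq> P"
    proof
      fix y assume "y \<in> S'"
      then obtain z where "y = a * z" "z \<in> ?Q" unfolding S'_def using S(2) by blast
      then show "y \<in> P" unfolding colon_def by (simp add: mult.commute)
    qed
    have as: "a * s \<in> S'" "a * s \<noteq> 0" unfolding S'_def using S(3,4) a0 by auto
    have ax: "a * x \<in> st (genmod D S')"
      using st_scale_sub[OF D st a(1) a0 _ S(3,4)] S(2,5) QD unfolding S'_def by blast
    have "a * x \<in> star_f D st P"
      by (rule star_fI[OF D PD(1,2), where st = st, OF _ S'P as ax]) (use S(1) in \<open>simp add: S'_def\<close>)
    moreover have "a * x \<in> D" using x a subringD(5)[OF D] by blast
    ultimately have "a * x \<in> P" using PD(4) by blast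
    then show "x \<in> ?Q" unfolding colon_def using x by (simp add: mult.commute)
  qed
  then have "star_f D st ?Q \<inter> D = ?Q" using ideal_sub_star_f[OF D st QD QM Q0] QD by blast
  then show ?thesis unfolding quasi_star_ideal_def ideal_of_def using QD QM Q0 by blast
qed

text \<open>Members of QMax^{star_f}(D) are prime: if a b \<in> P and a \<notin> P, maximality forces
  (P :_D a) = P, which contains b.\<close>

lemma QMax_prime:
  assumes D: "subring D" and st: "semistar D st" and P: "P \<in> QMax D (star_f D st)"
  shows "prime_ideal_of D P"
proof -
  note PD = QMaxD[OF P]
  have "b \<in> P" if ab: "a \<in> D" "b \<in> D" "a * b \<in> P" "a \<notin> P" for a b
  proof -
    have Q: "quasi_star_ideal D (star_f D st) (colon D P a)" by (rule colon_quasi_ideal[OF D st PD(1) ab(1,4)])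
    have "P \<subseteq> colon D P a" by (rule quasi_sub_colon[OF PD(1) ab(1)])
    moreover have "colon D P a \<noteq> D"
    proof
      assume "colon D P a = D"
      then have "1 \<in> colon D P a" using subringD(2)[OF D] by simp
      then show False using ab(4) unfolding colon_def by simp
    qed
    ultimately have "colon D P a = P" by (rule PD(7)[OF Q, rotated])
    moreover have "b \<in> colon D P a" unfolding colon_def using ab by (simp add: mult.commute)
    ultimately show "b \<in> P" by simp
  qed
  then have "\<forall>a\<in>D. \<forall>b\<in>D. a * b \<in> P \<longrightarrow> a \<in> P \<or> b \<in> P" by blast
  then show ?thesis unfolding prime_ideal_of_def ideal_of_def using PD(2,3,6) by simp
qed

section \<open>Existence of maximal quasi-star_f-ideals\<close>

lemma quasi_closure:
  assumes D: "subring D" and st: "semistar D st" and I: "I \<subseteq> D" "is_module D I" "I \<noteq> {0}"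
    and one: "1 \<notin> star_f D st I"
  shows "quasi_star_ideal D (star_f D st) (star_f D st I \<inter> D)" "star_f D st I \<inter> D \<noteq> D"
    "I \<subseteq> star_f D st I \<inter> D"
proof -
  let ?I' = "star_f D st I \<inter> D"
  show II': "I \<subseteq> ?I'" using ideal_sub_star_f[OF D st I] I(1) by blast
  have I'D: "?I' \<subseteq> D" by blast
  have I'M: "is_module D ?I'" by (rule module_Int[OF star_f_module[OF D st I] module_self[OF D]])
  have I'0: "?I' \<noteq> {0}" using II' I(3) is_moduleD(1)[OF I(2)] by blast
  have "star_f D st ?I' \<inter> D = ?I'"
    using star_f_contraction_sub[OF D st I(1,2)] ideal_sub_star_f[OF D st I'D I'M I'0] by blast
  then show "quasi_star_ideal D (star_f D st) ?I'"
    unfolding quasi_star_ideal_def ideal_of_def using I'D I'M I'0 by blast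
  show "?I' \<noteq> D" using one subringD(2)[OF D] by blast
qed

lemma chain_union_module:
  assumes C: "C \<noteq> {}" and M: "\<And>Q. Q \<in> C \<Longrightarrow> is_module R Q"
    and comp: "\<And>X Y. X \<in> C \<Longrightarrow> Y \<in> C \<Longrightarrow> X \<subseteq> Y \<or> Y \<subseteq> X"
  shows "is_module R (\<Union>C)"
  unfolding is_module_def
proof (intro conjI ballI)
  show "0 \<in> \<Union>C" using C is_moduleD(1)[OF M] by blast
next
  fix x y assume "x \<in> \<Union>C" "y \<in> \<Union>C"
  then obtain X Y where XY: "X \<in> C" "Y \<in> C" "x \<in> X" "y \<in> Y" by blast
  then show "x + y \<in> \<Union>C"
    using comp[OF XY(1,2)] is_moduleD(2)[OF M[OF XY(1)]] is_moduleD(2)[OF M[OF XY(2)]] by blast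
next
  fix r x assume r: "r \<in> R" and "x \<in> \<Union>C"
  then obtain X where X: "X \<in> C" "x \<in> X" by blast
  then show "r * x \<in> \<Union>C" using is_moduleD(3)[OF M[OF X(1)] r] by blast
qed

text \<open>The union of a nonempty chain of proper quasi-star_f-ideals is again one:
  star_f is of finite type, so it commutes with directed unions.\<close>

lemma chain_union_quasi:
  assumes D: "subring D" and st: "semistar D st" and C: "C \<noteq> {}"
    and chain: "subset.chain {Q. quasi_star_ideal D (star_f D st) Q \<and> Q \<noteq> D} C"
  shows "quasi_star_ideal D (star_f D st) (\<Union>C) \<and> \<Union>C \<noteq> D"
proof -
  have mem: "Q \<subseteq> D" "is_module D Q" "Q \<noteq> {0}" "star_f D st Q \<inter> D = Q" "Q \<noteq> D" if "Q \<in> C" for Q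
    using chain that unfolding subset_chain_def quasi_star_ideal_def ideal_of_def by auto
  have comp: "\<And>X Y. X \<in> C \<Longrightarrow> Y \<in> C \<Longrightarrow> X \<subseteq> Y \<or> Y \<subseteq> X"
    using chain unfolding subset_chain_def by blast
  obtain Q0 where Q0: "Q0 \<in> C" using C by blast
  let ?U = "\<Union>C"
  have UD: "?U \<subseteq> D" using mem(1) by blast
  have UM: "is_module D ?U" by (rule chain_union_module[OF C mem(2) comp])
  have U0: "?U \<noteq> {0}" using mem(3)[OF Q0] Q0 is_moduleD(1)[OF mem(2)[OF Q0]] by blast
  have U1: "?U \<noteq> D"
  proof
    assume "?U = D"
    then obtain X where "X \<in> C" "1 \<in> X" using subringD(2)[OF D] by blast
    then show False using ideal_one_notin[OF D mem(1,2,5)] by blast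
  qed
  have "x \<in> ?U" if x: "x \<in> star_f D st ?U" "x \<in> D" for x
  proof -
    obtain S s where S: "finite S" "S \<subseteq> ?U" "s \<in> S" "s \<noteq> 0" "x \<in> st (genmod D S)"
      using star_fE[OF D x(1)] by blast
    obtain B where B: "B \<in> C" "S \<subseteq> B" using finite_subset_Union_chain[OF S(1,2) C chain] by blast
    have "x \<in> star_f D st B" by (rule star_fI[OF D mem(1,2)[OF B(1)], where st = st, OF S(1) B(2) S(3,4,5)])
    then show "x \<in> ?U" using mem(4)[OF B(1)] x(2) B(1) by blast
  qed
  then have "star_f D st ?U \<inter> D = ?U" using ideal_sub_star_f[OF D st UD UM U0] UD by blast
  then show ?thesis unfolding quasi_star_ideal_def ideal_of_def using UD UM U0 U1 by blast
qed

lemma exists_QMax: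
  assumes D: "subring D" and st: "semistar D st"
    and I: "I \<subseteq> D" "is_module D I" "I \<noteq> {0}" and one: "1 \<notin> star_f D st I"
  shows "\<exists>P \<in> QMax D (star_f D st). I \<subseteq> P"
proof -
  let ?sf = "star_f D st"
  define \<A> where "\<A> = {Q. quasi_star_ideal D ?sf Q \<and> Q \<noteq> D \<and> I \<subseteq> Q}"
  have "star_f D st I \<inter> D \<in> \<A>" unfolding \<A>_def using quasi_closure[OF D st I one] by blast
  then have ne: "\<A> \<noteq> {}" by blast
  have "\<Union>\<C> \<in> \<A>" if C: "\<C> \<noteq> {}" "subset.chain \<A> \<C>" for \<C>
  proof -
    have "subset.chain {Q. quasi_star_ideal D ?sf Q \<and> Q \<noteq> D} \<C>"
      using C(2) unfolding subset_chain_def \<A>_def by blast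
    moreover have "I \<subseteq> \<Union>\<C>" using C unfolding subset_chain_def \<A>_def by blast
    ultimately show ?thesis unfolding \<A>_def using chain_union_quasi[OF D st C(1)] by blast
  qed
  then obtain M where M: "M \<in> \<A>" "\<And>X. X \<in> \<A> \<Longrightarrow> M \<subseteq> X \<Longrightarrow> X = M"
    using subset_Zorn_nonempty[OF ne] by blast
  then have "M \<in> QMax D ?sf" unfolding QMax_def \<A>_def by blast
  moreover have "I \<subseteq> M" using M(1) unfolding \<A>_def by blast
  ultimately show ?thesis by blast
qed


section \<open>Extended prime ideals\<close>

lemma gauss_prime:
  assumes A: "subring A" and Q: "prime_ideal_of A Q"
    and p: "\<And>i. coeff p i \<in> A" and q: "\<And>i. coeff q i \<in> A" and pq: "\<And>n. coeff (p * q) n \<in> Q"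
  shows "(\<forall>i. coeff p i \<in> Q) \<or> (\<forall>i. coeff q i \<in> Q)"
proof (rule ccontr)
  assume "\<not> ?thesis"
  then obtain i0 j0 where "coeff p i0 \<notin> Q" "coeff q j0 \<notin> Q" by blast
  define i where "i = (LEAST i. coeff p i \<notin> Q)"
  define j where "j = (LEAST j. coeff q j \<notin> Q)"
  have pi: "coeff p i \<notin> Q" unfolding i_def by (rule LeastI[of "\<lambda>i. coeff p i \<notin> Q" i0]) fact
  have pl: "coeff p k \<in> Q" if "k < i" for k using not_less_Least[OF that[unfolded i_def]] by blast
  have qj: "coeff q j \<notin> Q" unfolding j_def by (rule LeastI[of "\<lambda>i. coeff q i \<notin> Q" j0]) fact
  have ql: "coeff q k \<in> Q" if "k < j" for k using not_less_Least[OF that[unfolded j_def]] by blast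
  have M: "is_module A Q" using prime_idealD[OF Q] by blast
  have s: "coeff (p * q) (i + j) = coeff p i * coeff q (i + j - i)
      + (\<Sum>k\<in>{..i+j} - {i}. coeff p k * coeff q (i + j - k))"
    unfolding coeff_mult by (rule sum.remove) auto
  have rest: "(\<Sum>k\<in>{..i+j} - {i}. coeff p k * coeff q (i + j - k)) \<in> Q"
  proof (rule module_sum[OF M])
    fix k assume k: "k \<in> {..i+j} - {i}"
    show "coeff p k * coeff q (i + j - k) \<in> Q"
    proof (cases "k < i")
      case True then show ?thesis using is_moduleD(3)[OF M q pl[OF True]] by (simp add: mult.commute)
    next
      case False then have "i + j - k < j" using k by auto
      then show ?thesis using is_moduleD(3)[OF M p ql] by blast
    qed
  qed
  have "coeff p i * coeff q j \<in> Q"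
    using module_diff[OF M A pq[of "i+j"] rest] s by simp
  then show False using prime_idealD(4)[OF Q p q] pi qj by blast
qed


lemma polyring_prime:
  assumes A: "subring A" and t: "transc_over (qf A) x" and Q: "prime_ideal_of A Q"
  shows "prime_ideal_of (polyring A x) (polyring Q x)"
proof -
  note QD = prime_idealD[OF Q]
  have Aq: "A \<subseteq> qf A" by (rule qf_subset[OF A])
  have L: "subring (qf A)" by (rule qf_subring[OF A])
  have sub: "polyring Q x \<subseteq> polyring A x" using QD(1) by (rule polyring_mono)
  have mod: "is_module (polyring A x) (polyring Q x)"
    using genmod_polyring_char[OF A QD(2), of x] genmod_module[OF polyring_subring[OF A], of x Q]
    unfolding polyring_def by simp
  have ne: "polyring Q x \<noteq> polyring A x"
  proof
    assume "polyring Q x = polyring A x"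
    then have "1 \<in> polyring Q x" using subringD(2)[OF polyring_subring[OF A]] by metis
    then obtain q where q: "1 = poly q x" "\<And>i. coeff q i \<in> Q" unfolding polyring_def by blast
    have "q = 1"
      by (rule transc_unique[OF L t]) (use q QD(1) Aq subringD(1,2)[OF L] in \<open>auto simp: coeff_1\<close>)
    then show False using q(2)[of 0] ideal_one_notin[OF A QD(1-3)] by simp
  qed
  have prime: "a \<in> polyring Q x \<or> b \<in> polyring Q x"
    if hab: "a \<in> polyring A x" "b \<in> polyring A x" "a * b \<in> polyring Q x" for a b
  proof -
    obtain p q where pq: "a = poly p x" "\<And>i. coeff p i \<in> A" "b = poly q x" "\<And>i. coeff q i \<in> A"
      using hab(1,2) unfolding polyring_def by blast
    obtain r where r: "a * b = poly r x" "\<And>i. coeff r i \<in> Q" using hab(3) unfolding polyring_def by blast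
    have c1: "coeff (p * q) i \<in> qf A" for i using coeff_mult_in[OF A pq(2) pq(4)] Aq by blast
    have c2: "coeff r i \<in> qf A" for i using r(2) QD(1) Aq by blast
    have "p * q = r" by (rule transc_unique[OF L t c1 c2]) (use pq r in simp)
    then have "(\<forall>i. coeff p i \<in> Q) \<or> (\<forall>i. coeff q i \<in> Q)"
      using gauss_prime[OF A Q pq(2) pq(4)] r(2) by blast
    then show ?thesis using pq polyringI by metis
  qed
  show ?thesis unfolding prime_ideal_of_def ideal_of_def using sub mod ne prime by blast
qed

section \<open>The sets Delta1 and S1\<close>

lemma Delta1_prime: "Q1 \<in> Delta1 D X st \<Longrightarrow> prime_ideal_of (polyring D X) Q1"
  unfolding Delta1_def by blast

lemma zero_Delta1:
  assumes D: "subring D" shows "{0} \<in> Delta1 D X st"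
proof -
  have R: "subring (polyring D X)" by (rule polyring_subring[OF D])
  have ne: "{0} \<noteq> polyring D X"
  proof
    assume "{0} = polyring D X"
    then have "(1::'a) \<in> {0}" using subringD(2)[OF R] by simp
    then show False by simp
  qed
  have "prime_ideal_of (polyring D X) {0}"
    unfolding prime_ideal_of_def ideal_of_def is_module_def using subringD(1)[OF R] ne by auto
  moreover have "{0} \<inter> D = {0}" using subringD(1)[OF D] by blast
  ultimately show ?thesis unfolding Delta1_def by blast
qed

lemma QMax_Delta1:
  assumes D: "subring D" and st: "semistar D st" and t: "transc_over (qf D) X"
    and P: "P \<in> QMax D (star_f D st)"
  shows "polyring P X \<in> Delta1 D X st"
proof -
  note PD = QMaxD[OF P]
  have pr: "prime_ideal_of (polyring D X) (polyring P X)"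
    by (rule polyring_prime[OF D t QMax_prime[OF D st P]])
  have c: "polyring P X \<inter> D = P" by (rule polyring_contract[OF D t PD(2) is_moduleD(1)[OF PD(3)]])
  have sub: "star_f D st P \<subseteq> st D"
  proof
    fix x assume "x \<in> star_f D st P"
    then obtain S s where S: "finite S" "S \<subseteq> P" "s \<in> S" "s \<noteq> 0" "x \<in> st (genmod D S)"
      by (rule star_fE[OF D])
    have SD: "S \<subseteq> D" using S(2) PD(2) by blast
    have "st (genmod D S) \<subseteq> st D"
      using semistarD(3)[OF st genmod_Fbar[OF D SD S(3,4)] D_Fbar[OF D] genmod_sub_D[OF D SD]] .
    then show "x \<in> st D" using S(5) by blast
  qed
  have "1 \<in> st D" using semistarD(4)[OF st D_Fbar[OF D]] subringD(2)[OF D] by blast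
  moreover have "1 \<notin> star_f D st P"
    using PD(5) subringD(2)[OF D] ideal_one_notin[OF D PD(2,3,6)] by blast
  ultimately have "star_f D st P \<subset> st D" using sub by blast
  then show ?thesis unfolding Delta1_def using pr c by simp
qed

lemma S1_iff:
  "x \<in> S1 D X Y st \<longleftrightarrow> x \<in> polyring (polyring D X) Y \<and> (\<forall>Q1\<in>Delta1 D X st. x \<notin> polyring Q1 Y)"
  unfolding S1_def by blast

text \<open>S1 is the complement in D1[Y] of a union of primes Q1[Y] (one of them zero), hence
  a multiplicative set, and R = D1[Y]_S1 is a ring of fractions.\<close>

lemma S1_multclosed:
  assumes D: "subring D" and tY: "transc_over (qf (polyring D X)) Y"
  shows "multclosed (polyring (polyring D X) Y) (S1 D X Y st)"
proof -
  let ?D1 = "polyring D X" let ?D1Y = "polyring ?D1 Y"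
  have D1: "subring ?D1" by (rule polyring_subring[OF D])
  have D1Y: "subring ?D1Y" by (rule polyring_subring[OF D1])
  have pr: "prime_ideal_of ?D1Y (polyring Q1 Y)" if "Q1 \<in> Delta1 D X st" for Q1
    by (rule polyring_prime[OF D1 tY Delta1_prime[OF that]])
  have "1 \<notin> polyring Q1 Y" if "Q1 \<in> Delta1 D X st" for Q1
    using ideal_one_notin[OF D1Y prime_idealD(1-3)[OF pr[OF that]]] .
  then have "1 \<in> S1 D X Y st" unfolding S1_iff using subringD(2)[OF D1Y] by blast
  moreover have "0 \<notin> S1 D X Y st"
  proof
    assume "0 \<in> S1 D X Y st"
    moreover have "(0::'a) \<in> polyring {0} Y" using polyringI[of 0 "{0}" Y] by simp
    ultimately show False using zero_Delta1[OF D] unfolding S1_iff by blast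
  qed
  moreover have "s * t \<in> S1 D X Y st" if s: "s \<in> S1 D X Y st" and t: "t \<in> S1 D X Y st" for s t
    unfolding S1_iff
  proof (intro conjI ballI)
    have st: "s \<in> ?D1Y" "t \<in> ?D1Y" using s t unfolding S1_iff by blast+
    then show "s * t \<in> ?D1Y" by (rule subringD(5)[OF D1Y])
    fix Q1 assume Q1: "Q1 \<in> Delta1 D X st"
    show "s * t \<notin> polyring Q1 Y"
      using prime_idealD(4)[OF pr[OF Q1] st] s t Q1 unfolding S1_iff by blast
  qed
  moreover have "S1 D X Y st \<subseteq> ?D1Y" unfolding S1_def by blast
  ultimately show ?thesis unfolding multclosed_def by blast
qed

lemma D1YS_eq: "D1YS D X Y st = locset (polyring (polyring D X) Y) (S1 D X Y st)"
  unfolding D1YS_def locset_def by simp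

lemma D1YS_ring:
  assumes D: "subring D" and tY: "transc_over (qf (polyring D X)) Y"
  shows "subring (D1YS D X Y st)" "polyring D X \<subseteq> D1YS D X Y st"
proof -
  have D1: "subring (polyring D X)" by (rule polyring_subring[OF D])
  have T: "multclosed (polyring (polyring D X) Y) (S1 D X Y st)" by (rule S1_multclosed[OF D tY])
  show "subring (D1YS D X Y st)" unfolding D1YS_eq by (rule locset_subring[OF polyring_subring[OF D1] T])
  show "polyring D X \<subseteq> D1YS D X Y st"
    unfolding D1YS_eq using locset_sub[OF T] const_in_polyring[OF D1] by blast
qed

lemma poly_with_coefficient_set:
  assumes "finite S"
  obtains p where "\<And>i. coeff p i \<in> insert 0 S" "S \<subseteq> range (coeff p)"
proof -
  obtain xs where xs: "set xs = S" using finite_list[OF assms] by blast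
  have "coeff (Poly xs) i \<in> insert 0 S" for i
    unfolding coeff_Poly_eq using xs
    by (cases "i < length xs") (auto simp: nth_default_nth nth_default_beyond)
  moreover have "S \<subseteq> range (coeff (Poly xs))"
  proof
    fix s assume "s \<in> S"
    then obtain i where "i < length xs" "xs ! i = s" using xs by (auto simp: in_set_conv_nth)
    then show "s \<in> range (coeff (Poly xs))" by (metis coeff_Poly_eq nth_default_nth rangeI)
  qed
  ultimately show thesis using that by blast
qed

text \<open>A polynomial over D whose coefficients generate an ideal with (S)^star \<supseteq> 1 lies
  in S1: it cannot lie in Q1[Y] for Q1 \<in> Delta1, since then S \<subseteq> Q1 \<inter> D and
  D^star \<subseteq> (S)^star \<subseteq> (Q1 \<inter> D)^{star_f} \<subset> D^star.\<close>

lemma poly_in_S1: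
  assumes D: "subring D" and tY: "transc_over (qf (polyring D X)) Y" and st: "semistar D st"
    and p: "\<And>i. coeff p i \<in> D"
    and S: "finite S" "S \<subseteq> range (coeff p)" "s \<in> S" "s \<noteq> 0" and one: "1 \<in> st (genmod D S)"
  shows "poly p Y \<in> S1 D X Y st"
proof -
  let ?D1 = "polyring D X"
  have D1: "subring ?D1" by (rule polyring_subring[OF D])
  have DD1: "D \<subseteq> ?D1" using const_in_polyring[OF D] by blast
  have SD: "S \<subseteq> D" using S(2) p by blast
  have "poly p Y \<notin> polyring Q1 Y" if Q1: "Q1 \<in> Delta1 D X st" for Q1
  proof
    assume "poly p Y \<in> polyring Q1 Y"
    then obtain q where q: "poly p Y = poly q Y" "\<And>i. coeff q i \<in> Q1" using polyringE by blast
    have Q1D1: "Q1 \<subseteq> ?D1" using prime_idealD(1)[OF Delta1_prime[OF Q1]] .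
    have c1: "coeff p i \<in> qf ?D1" for i using p DD1 qf_subset[OF D1] by blast
    have c2: "coeff q i \<in> qf ?D1" for i using q(2) Q1D1 qf_subset[OF D1] by blast
    have "p = q" by (rule transc_unique[OF qf_subring[OF D1] tY c1 c2 q(1)])
    then have SQ: "S \<subseteq> Q1 \<inter> D" using S(2) SD q(2) by auto
    have "Q1 \<inter> D = {0} \<or> star_f D st (Q1 \<inter> D) \<subset> st D" using Q1 unfolding Delta1_def by blast
    then show False
    proof
      assume "Q1 \<inter> D = {0}" then show False using SQ S(3,4) by blast
    next
      assume proper: "star_f D st (Q1 \<inter> D) \<subset> st D"
      have JM: "is_module D (Q1 \<inter> D)"
        using module_Int[OF module_mono_ring[OF prime_idealD(2)[OF Delta1_prime[OF Q1]] DD1]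
            module_self[OF D]] .
      have "st D \<subseteq> st (genmod D S)" by (rule one_in_st_imp[OF D st genmod_Fbar[OF D SD S(3,4)] one])
      moreover have "st (genmod D S) \<subseteq> star_f D st (Q1 \<inter> D)"
        using star_fI[OF D _ JM S(1) SQ S(3,4), where st = st] by blast
      ultimately show False using proper by blast
    qed
  qed
  moreover have "poly p Y \<in> polyring ?D1 Y" using p DD1 by (intro polyringI) blast
  ultimately show ?thesis unfolding S1_iff by blast
qed

section \<open>First inclusion: E^~ \<subseteq> E D1[Y]_S1\<close>

lemma colon_nonzero:
  assumes D: "subring D" and E: "E \<in> Fbar D" and z: "z \<in> qf D"
  shows "colon D E z \<noteq> {0}"
proof -
  have EM: "is_module D E" using FbarD(2)[OF E] .
  obtain e where e: "e \<in> E" "e \<noteq> 0" using FbarD(3)[OF E] is_moduleD(1)[OF EM] by blast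
  obtain c d where cd: "c \<in> D" "d \<in> D" "d \<noteq> 0" "e = c / d" using e(1) FbarD(1)[OF E] unfolding qf_def by blast
  obtain a b where ab: "a \<in> D" "b \<in> D" "b \<noteq> 0" "z = a / b" using z unfolding qf_def by blast
  have "(b * c) * z = (a * d) * e" using ab cd by (simp add: field_simps)
  moreover have "(a * d) * e \<in> E" using is_moduleD(3)[OF EM subringD(5)[OF D ab(1) cd(2)] e(1)] .
  ultimately have "b * c \<in> colon D E z" unfolding colon_def using subringD(5)[OF D ab(2) cd(1)] by simp
  moreover have "b * c \<noteq> 0" using ab cd e by auto
  ultimately show ?thesis by blast
qed

lemma colon_not_in_QMax:
  assumes D: "subring D" and st: "semistar D st" and E: "E \<in> Fbar D"
    and z: "z \<in> star_tilde D st E" and P: "P \<in> QMax D (star_f D st)"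
  shows "\<not> colon D E z \<subseteq> P"
proof
  assume IP: "colon D E z \<subseteq> P"
  have T: "multclosed D (D - P)" by (rule prime_compl_multclosed[OF D QMax_prime[OF D st P]])
  have "z \<in> genmod (loc D P) E" using z P unfolding star_tilde_def by blast
  then obtain t where t: "t \<in> D - P" "t * z \<in> genmod D E"
    unfolding loc_eq genmod_locset_iff[OF D T] by blast
  then have "t \<in> colon D E z" unfolding colon_def genmod_idem[OF D FbarD(2)[OF E]] by blast
  then show False using IP t by blast
qed

text \<open>Inclusion (1): for z \<in> E^~ some finite S \<subseteq> (E :_D z) has 1 \<in> (S)^star (else
  (E :_D z) would lie in a member of QMax); a polynomial f with coefficient set S is in
  S1, and f z \<in> E D1[Y].\<close>

lemma star_tilde_sub_genmod:
  assumes D: "subring D" and tY: "transc_over (qf (polyring D X)) Y"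
    and st: "semistar D st" and E: "E \<in> Fbar D"
  shows "star_tilde D st E \<subseteq> genmod (D1YS D X Y st) E"
proof
  fix z assume z: "z \<in> star_tilde D st E"
  let ?I = "colon D E z"
  have D1: "subring (polyring D X)" by (rule polyring_subring[OF D])
  have I: "?I \<subseteq> D" "is_module D ?I" by (rule colon_ideal[OF D FbarD(2)[OF E]])+
  have "z \<in> qf D" using z unfolding star_tilde_def by blast
  then have "1 \<in> star_f D st ?I"
    using exists_QMax[OF D st I colon_nonzero[OF D E]] colon_not_in_QMax[OF D st E z] by blast
  then obtain S s where S: "finite S" "S \<subseteq> ?I" "s \<in> S" "s \<noteq> 0" "1 \<in> st (genmod D S)"
    by (rule star_fE[OF D])
  obtain p where p: "\<And>i. coeff p i \<in> insert 0 S" "S \<subseteq> range (coeff p)"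
    using poly_with_coefficient_set[OF S(1)] by blast
  have "coeff p i \<in> D" for i using p(1)[of i] S(2) I(1) subringD(1)[OF D] by auto
  then have f: "poly p Y \<in> S1 D X Y st" by (rule poly_in_S1[OF D tY st _ S(1) p(2) S(3-5)])
  have "coeff (smult z p) i \<in> E" for i
    using p(1)[of i] S(2) is_moduleD(1)[OF FbarD(2)[OF E]] unfolding colon_def by (auto simp: mult.commute)
  then have "poly (smult z p) Y \<in> genmod (polyring (polyring D X) Y) E"
    by (rule poly_in_genmod_polyring[OF D1])
  then have "poly p Y * z \<in> genmod (polyring (polyring D X) Y) E" by (simp add: mult.commute)
  then show "z \<in> genmod (D1YS D X Y st) E"
    unfolding D1YS_eq genmod_locset_iff[OF polyring_subring[OF D1] S1_multclosed[OF D tY]] using f by blast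
qed


section \<open>Elements of K(X) that become polynomials over K\<close>

text \<open>Degrees of the nonzero polynomials p over D that clear the denominator of v,
  i.e. with p(X) v \<in> K[X], and the least such degree.\<close>

definition denom_degrees :: "'a::field set \<Rightarrow> 'a \<Rightarrow> 'a \<Rightarrow> nat set" where
  "denom_degrees D X v =
     {degree p | p. (\<forall>i. coeff p i \<in> D) \<and> p \<noteq> 0 \<and> poly p X * v \<in> polyring (qf D) X}"

definition min_denom_degree :: "'a::field set \<Rightarrow> 'a \<Rightarrow> 'a \<Rightarrow> nat" where
  "min_denom_degree D X v = (LEAST n. n \<in> denom_degrees D X v)"

lemma min_denom_degree_le:
  assumes "\<And>i. coeff p i \<in> D" "p \<noteq> 0" "poly p X * v \<in> polyring (qf D) X"
  shows "min_denom_degree D X v \<le> degree p"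
  unfolding min_denom_degree_def by (rule Least_le) (use assms in \<open>auto simp: denom_degrees_def\<close>)

lemma min_denom_degree_attained:
  assumes D: "subring D" and v: "v \<in> qf (polyring D X)"
  obtains g where "\<And>i. coeff g i \<in> D" "g \<noteq> 0" "poly g X * v \<in> polyring (qf D) X"
    "degree g = min_denom_degree D X v"
proof -
  obtain a b where ab: "a \<in> polyring D X" "b \<in> polyring D X" "b \<noteq> 0" "v = a / b"
    using v unfolding qf_def by blast
  obtain pb where pb: "b = poly pb X" "\<And>i. coeff pb i \<in> D" using polyringE[OF ab(2)] by blast
  have "poly pb X * v = a" using ab pb(1) by simp
  then have "poly pb X * v \<in> polyring (qf D) X" using ab(1) polyring_mono[OF qf_subset[OF D]] by blast
  moreover have "pb \<noteq> 0" using pb(1) ab(3) by auto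
  ultimately have "degree pb \<in> denom_degrees D X v" unfolding denom_degrees_def using pb(2) by blast
  then have "min_denom_degree D X v \<in> denom_degrees D X v"
    unfolding min_denom_degree_def by (rule LeastI)
  then obtain g where "min_denom_degree D X v = degree g" "\<forall>i. coeff g i \<in> D" "g \<noteq> 0"
    "poly g X * v \<in> polyring (qf D) X" unfolding denom_degrees_def by blast
  then show thesis using that[of g] by simp
qed

lemma polyring_qf_cancel:
  assumes D: "subring D" and c: "c \<in> D" "c \<noteq> 0" and w: "c * w \<in> polyring (qf D) X"
  shows "w \<in> polyring (qf D) X"
proof -
  have W: "subring (polyring (qf D) X)" by (rule polyring_subring[OF qf_subring[OF D]])
  have "1 / c \<in> polyring (qf D) X"
    using qf_inverse[of c D] c qf_subset[OF D] const_in_polyring[OF qf_subring[OF D]] by blast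
  then have "(1 / c) * (c * w) \<in> polyring (qf D) X" using subringD(5)[OF W _ w] by blast
  then show ?thesis using c(2) by simp
qed

lemma conductor_ideal:
  assumes D: "subring D" and v: "v \<notin> polyring (qf D) X"
  shows "ideal_of (polyring D X) (colon (polyring D X) (polyring (qf D) X) v)"
    "colon (polyring D X) (polyring (qf D) X) v \<noteq> polyring D X"
    "colon (polyring D X) (polyring (qf D) X) v \<inter> D = {0}"
proof -
  let ?D1 = "polyring D X" and ?W = "polyring (qf D) X"
  have D1: "subring ?D1" by (rule polyring_subring[OF D])
  have W: "subring ?W" by (rule polyring_subring[OF qf_subring[OF D]])
  have M: "is_module ?D1 ?W" by (rule module_of_subring[OF W polyring_mono[OF qf_subset[OF D]]])
  show "ideal_of ?D1 (colon ?D1 ?W v)" unfolding ideal_of_def using colon_ideal[OF D1 M] by blast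
  show "colon ?D1 ?W v \<noteq> ?D1"
  proof
    assume "colon ?D1 ?W v = ?D1"
    then have "1 \<in> colon ?D1 ?W v" using subringD(2)[OF D1] by simp
    then show False using v unfolding colon_def by simp
  qed
  have "c = 0" if c: "c \<in> D" "c * v \<in> ?W" for c
    using polyring_qf_cancel[OF D c(1) _ c(2)] v by blast
  then show "colon ?D1 ?W v \<inter> D = {0}"
    using subringD(1)[OF D] subringD(1)[OF W] const_in_polyring[OF D] unfolding colon_def by auto
qed

text \<open>Let g be a denominator of v over D of degree at most that of every denominator of
  h1 v.  Then h1 h2 v \<in> K[X] implies h2 v \<in> K[X]: pseudo-dividing h2 by g leaves a
  remainder that is a denominator of h1 v of smaller degree, hence zero.\<close>

lemma denominator_exchange:
  assumes D: "subring D"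
    and g: "\<And>i. coeff g i \<in> D" "g \<noteq> 0" "poly g X * v \<in> polyring (qf D) X"
    and h: "h1 \<in> polyring D X" "h2 \<in> polyring D X" "h1 * h2 * v \<in> polyring (qf D) X"
    and small: "degree g \<le> min_denom_degree D X (h1 * v)"
  shows "h2 * v \<in> polyring (qf D) X"
proof -
  let ?D1 = "polyring D X" and ?W = "polyring (qf D) X"
  have D1: "subring ?D1" by (rule polyring_subring[OF D])
  have W: "subring ?W" by (rule polyring_subring[OF qf_subring[OF D]])
  have D1W: "?D1 \<subseteq> ?W" by (rule polyring_mono[OF qf_subset[OF D]])
  obtain p2 where p2: "h2 = poly p2 X" "\<And>i. coeff p2 i \<in> D" using polyringE[OF h(2)] by blast
  obtain k q r where qr: "smult (lead_coeff g ^ k) p2 = q * g + r" "r = 0 \<or> degree r < degree g"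
    "\<forall>i. coeff q i \<in> D" "\<forall>i. coeff r i \<in> D"
    using pseudo_division[OF D g(1,2) p2(2)] by blast
  define c where "c = lead_coeff g ^ k"
  have c: "c \<in> D" "c \<noteq> 0" unfolding c_def using g(1,2) subring_power[OF D] by auto
  have cW: "c \<in> ?W" using c(1) D1W const_in_polyring[OF D] by blast
  have qW: "poly q X * h1 \<in> ?W" using subringD(5)[OF D1 polyringI h(1)] qr(3) D1W by blast
  have eq: "c * h2 = poly q X * poly g X + poly r X"
    using arg_cong[OF qr(1), of "\<lambda>p. poly p X"] p2 unfolding c_def by simp
  have pr: "poly r X = c * h2 - poly q X * poly g X" using eq by simp
  have "poly r X * (h1 * v) = c * (h1 * h2 * v) - (poly q X * h1) * (poly g X * v)"
    unfolding pr by (simp add: algebra_simps)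
  also have "\<dots> \<in> ?W" using subringD(4,5)[OF W] cW h(3) qW g(3) by simp
  finally have rv: "poly r X * (h1 * v) \<in> ?W" .
  have "r = 0"
  proof (rule ccontr)
    assume r0: "r \<noteq> 0"
    have "min_denom_degree D X (h1 * v) \<le> degree r"
      using min_denom_degree_le[OF _ r0 rv] qr(4) by blast
    then show False using small qr(2) r0 by simp
  qed
  then have "c * (h2 * v) = poly q X * (poly g X * v)" using eq by (simp add: algebra_simps)
  also have "\<dots> \<in> ?W" using subringD(5)[OF W _ g(3)] qr(3) D1W polyringI by blast
  finally show "h2 * v \<in> ?W" by (rule polyring_qf_cancel[OF D c])
qed

text \<open>If moreover v has least minimal denominator degree among its D1-multiples outside
  K[X], the conductor of v is prime (by the exchange lemma with g of least degree).\<close>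

lemma conductor_prime:
  assumes D: "subring D" and v: "v \<in> qf (polyring D X)" "v \<notin> polyring (qf D) X"
    and minimal: "\<And>h. h \<in> polyring D X \<Longrightarrow> h * v \<notin> polyring (qf D) X
      \<Longrightarrow> min_denom_degree D X v \<le> min_denom_degree D X (h * v)"
  shows "prime_ideal_of (polyring D X) (colon (polyring D X) (polyring (qf D) X) v)"
proof -
  let ?D1 = "polyring D X" and ?W = "polyring (qf D) X"
  let ?Q = "colon ?D1 ?W v"
  obtain g where g: "\<And>i. coeff g i \<in> D" "g \<noteq> 0" "poly g X * v \<in> ?W"
    "degree g = min_denom_degree D X v" using min_denom_degree_attained[OF D v(1)] by blast
  have "h2 \<in> ?Q" if h: "h1 \<in> ?D1" "h2 \<in> ?D1" "h1 * h2 \<in> ?Q" "h1 \<notin> ?Q" for h1 h2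
  proof -
    have "h1 * v \<notin> ?W" using h(1,4) unfolding colon_def by blast
    then have "degree g \<le> min_denom_degree D X (h1 * v)" using minimal[OF h(1)] g(4) by simp
    moreover have "h1 * h2 * v \<in> ?W" using h(3) unfolding colon_def by blast
    ultimately have "h2 * v \<in> ?W" using denominator_exchange[OF D g(1-3) h(1,2)] by blast
    then show "h2 \<in> ?Q" using h(2) unfolding colon_def by blast
  qed
  then show ?thesis using conductor_ideal[OF D v(2)] unfolding prime_ideal_of_def by blast
qed

text \<open>An element u of K(X) such that h u \<in> K[X] for all h in a set H \<subseteq> D1 not contained
  in any prime Q1 of D1 with Q1 \<inter> D = 0 is itself in K[X]: otherwise the conductor of a
  suitable multiple w u would be such a prime containing H.\<close>

lemma polynomial_over_qf:
  assumes D: "subring D" and u: "u \<in> qf (polyring D X)"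
    and H: "H \<subseteq> polyring D X" "\<And>h. h \<in> H \<Longrightarrow> h * u \<in> polyring (qf D) X"
    and avoid: "\<And>Q1. prime_ideal_of (polyring D X) Q1 \<Longrightarrow> Q1 \<inter> D = {0} \<Longrightarrow> \<exists>h\<in>H. h \<notin> Q1"
  shows "u \<in> polyring (qf D) X"
proof (rule ccontr)
  assume un: "u \<notin> polyring (qf D) X"
  let ?D1 = "polyring D X" and ?W = "polyring (qf D) X"
  have D1: "subring ?D1" by (rule polyring_subring[OF D])
  have K1: "subring (qf ?D1)" by (rule qf_subring[OF D1])
  have D1W: "?D1 \<subseteq> ?W" by (rule polyring_mono[OF qf_subset[OF D]])
  define V where "V = {w * u | w. w \<in> ?D1 \<and> w * u \<notin> ?W}"
  have "u \<in> V" unfolding V_def using un subringD(2)[OF D1] by force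
  then obtain v0 where v0: "v0 \<in> V" "\<And>v. v \<in> V \<Longrightarrow> min_denom_degree D X v0 \<le> min_denom_degree D X v"
    using ex_has_least_nat[of "\<lambda>v. v \<in> V" u "min_denom_degree D X"] by blast
  obtain w0 where w0: "w0 \<in> ?D1" "v0 = w0 * u" "v0 \<notin> ?W" using v0(1) unfolding V_def by blast
  have v0K: "v0 \<in> qf ?D1" using subringD(5)[OF K1 _ u] w0 qf_subset[OF D1] by blast
  have "min_denom_degree D X v0 \<le> min_denom_degree D X (h * v0)"
    if "h \<in> ?D1" "h * v0 \<notin> ?W" for h
    using v0(2) that subringD(5)[OF D1 that(1) w0(1)] unfolding V_def w0(2)
    by (metis (mono_tags, lifting) mem_Collect_eq mult.assoc)
  then have "prime_ideal_of ?D1 (colon ?D1 ?W v0)" by (rule conductor_prime[OF D v0K w0(3)])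
  then obtain h where h: "h \<in> H" "h \<notin> colon ?D1 ?W v0"
    using avoid conductor_ideal(3)[OF D w0(3)] by blast
  have "h * v0 = w0 * (h * u)" using w0(2) by (simp add: algebra_simps)
  also have "\<dots> \<in> ?W"
    using subringD(5)[OF polyring_subring[OF qf_subring[OF D]] _ H(2)[OF h(1)]] w0(1) D1W by blast
  finally show False using h H(1) unfolding colon_def by blast
qed

section \<open>Second inclusion: E D1[Y]_S1 \<inter> K(X) \<subseteq> E^~ D1\<close>

lemma coeffs_in_localization:
  assumes D: "subring D" and tX: "transc_over (qf D) X"
    and P: "prime_ideal_of D P" and E: "E \<in> Fbar D"
    and f: "\<And>i. coeff f i \<in> qf D" and g: "\<And>i. coeff g i \<in> D" and j0: "coeff g j0 \<notin> P"
    and mem: "poly f X * poly g X \<in> genmod (polyring D X) E"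
  shows "coeff f i \<in> genmod (loc D P) E"
proof -
  have T: "multclosed D (D - P)" by (rule prime_compl_multclosed[OF D P])
  have L: "subring (loc D P)" unfolding loc_eq by (rule locset_subring[OF D T])
  have DL: "D \<subseteq> loc D P" unfolding loc_eq by (rule locset_sub[OF T])
  have "coeff (f * g) n \<in> E" for n
  proof (rule genmod_polyring_coeff[OF D tX FbarD(2,1)[OF E]])
    show "coeff (f * g) k \<in> qf D" for k
      using coeff_mult_in[OF qf_subring[OF D] f, of g] g qf_subset[OF D] by blast
    show "poly (f * g) X \<in> genmod (polyring D X) E" using mem by simp
  qed
  then have fg: "coeff (f * g) n \<in> genmod (loc D P) E" for n using genmod_sub[OF L] by blast
  have "coeff g j0 \<noteq> 0" using j0 is_moduleD(1)[OF prime_idealD(2)[OF P]] by auto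
  moreover have "1 / coeff g j0 \<in> loc D P" unfolding loc_eq using locset_inv[OF T D] g j0 by blast
  ultimately show ?thesis
    using unit_coeff_cancel[OF L genmod_module[OF L] _ _ _ fg] g DL by blast
qed

lemma star_tilde_module:
  assumes D: "subring D" and st: "semistar D st"
  shows "is_module D (star_tilde D st E)" "star_tilde D st E \<subseteq> qf D"
proof -
  have "is_module D (genmod (loc D P) E)" if "P \<in> QMax D (star_f D st)" for P
  proof -
    have T: "multclosed D (D - P)" by (rule prime_compl_multclosed[OF D QMax_prime[OF D st that]])
    show ?thesis unfolding loc_eq
      using module_mono_ring[OF genmod_module[OF locset_subring[OF D T]] locset_sub[OF T]] .
  qed
  then show "is_module D (star_tilde D st E)"
    unfolding star_tilde_def by (intro module_Inter[OF module_of_subring[OF qf_subring[OF D] qf_subset[OF D]]]) blast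
  show "star_tilde D st E \<subseteq> qf D" unfolding star_tilde_def by blast
qed

lemma S1_denominator:
  assumes D: "subring D" and tY: "transc_over (qf (polyring D X)) Y" and E: "E \<in> Fbar D"
    and u: "u \<in> genmod (D1YS D X Y st) E" "u \<in> qf (polyring D X)"
  obtains \<sigma> where "\<And>k. coeff \<sigma> k \<in> polyring D X" "poly \<sigma> Y \<in> S1 D X Y st"
    "\<And>k. coeff \<sigma> k * u \<in> genmod (polyring D X) E"
proof -
  let ?D1 = "polyring D X"
  have D1: "subring ?D1" by (rule polyring_subring[OF D])
  obtain s where s: "s \<in> S1 D X Y st" "s * u \<in> genmod (polyring ?D1 Y) E"
    using u(1) unfolding D1YS_eq genmod_locset_iff[OF polyring_subring[OF D1] S1_multclosed[OF D tY]]
    by blast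
  obtain \<sigma> where \<sigma>: "s = poly \<sigma> Y" "\<And>k. coeff \<sigma> k \<in> ?D1"
    using s(1) polyringE unfolding S1_iff by blast
  have GK1: "genmod ?D1 E \<subseteq> qf ?D1"
    using genmod_least[OF module_of_subring[OF qf_subring[OF D1] qf_subset[OF D1]]]
      FbarD(1)[OF E] qf_mono[of D ?D1] const_in_polyring[OF D] by blast
  have "poly (smult u \<sigma>) Y \<in> genmod (polyring ?D1 Y) (genmod ?D1 E)"
    using s(2) genmod_mono[OF genmod_sub[OF D1]] \<sigma>(1) by (auto simp: mult.commute)
  then have "coeff (smult u \<sigma>) k \<in> genmod ?D1 E" for k
    by (rule genmod_polyring_coeff[OF D1 tY genmod_module[OF D1] GK1, rotated])
      (use subringD(5)[OF qf_subring[OF D1] u(2)] \<sigma>(2) qf_subset[OF D1] in auto)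
  then have "coeff \<sigma> k * u \<in> genmod ?D1 E" for k by (simp add: mult.commute)
  then show thesis using that[of \<sigma>] \<sigma> s(1) by blast
qed

text \<open>Inclusion (2): the sigma_k show u \<in> K[X] (no prime Q1 with Q1 \<inter> D = 0 contains
  them all) and, since for each P \<in> QMax some sigma_k avoids P[X], every X-coefficient
  of u lies in E D_P.\<close>

lemma genmod_D1YS_contract:
  assumes D: "subring D" and tX: "transc_over (qf D) X" and tY: "transc_over (qf (polyring D X)) Y"
    and st: "semistar D st" and E: "E \<in> Fbar D"
  shows "genmod (D1YS D X Y st) E \<inter> qf (polyring D X) \<subseteq> genmod (polyring D X) (star_tilde D st E)"
proof
  fix u assume u: "u \<in> genmod (D1YS D X Y st) E \<inter> qf (polyring D X)"
  let ?D1 = "polyring D X" and ?W = "polyring (qf D) X"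
  have D1W: "?D1 \<subseteq> ?W" by (rule polyring_mono[OF qf_subset[OF D]])
  obtain \<sigma> where \<sigma>: "\<And>k. coeff \<sigma> k \<in> ?D1" "poly \<sigma> Y \<in> S1 D X Y st"
    "\<And>k. coeff \<sigma> k * u \<in> genmod ?D1 E" using S1_denominator[OF D tY E] u by blast
  have avoid: "\<exists>k. coeff \<sigma> k \<notin> Q1" if "Q1 \<in> Delta1 D X st" for Q1
    using \<sigma>(2) that polyringI[of \<sigma> Q1 Y] unfolding S1_iff by blast
  have GW: "genmod ?D1 E \<subseteq> ?W"
    using genmod_least[OF module_of_subring[OF polyring_subring[OF qf_subring[OF D]] D1W]]
      FbarD(1)[OF E] const_in_polyring[OF qf_subring[OF D]] by blast
  have "u \<in> ?W"
  proof (rule polynomial_over_qf[OF D _ _ _ ])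
    show "u \<in> qf ?D1" "range (coeff \<sigma>) \<subseteq> ?D1" using u \<sigma>(1) by blast+
    show "h * u \<in> ?W" if "h \<in> range (coeff \<sigma>)" for h using that \<sigma>(3) GW by blast
    show "\<exists>h\<in>range (coeff \<sigma>). h \<notin> Q1" if "prime_ideal_of ?D1 Q1" "Q1 \<inter> D = {0}" for Q1
      using avoid[of Q1] that unfolding Delta1_def by blast
  qed
  then obtain f where f: "u = poly f X" "\<And>i. coeff f i \<in> qf D" using polyringE by blast
  have "coeff f i \<in> genmod (loc D P) E" if P: "P \<in> QMax D (star_f D st)" for P i
  proof -
    obtain k where k: "coeff \<sigma> k \<notin> polyring P X" using avoid[OF QMax_Delta1[OF D st tX P]] by blast
    obtain g where g: "coeff \<sigma> k = poly g X" "\<And>i. coeff g i \<in> D" using polyringE[OF \<sigma>(1)] by blast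
    obtain j where j: "coeff g j \<notin> P" using k polyringI[of g P X] unfolding g(1) by blast
    have "poly f X * poly g X \<in> genmod ?D1 E" using \<sigma>(3)[of k] f(1) g(1) by (simp add: mult.commute)
    then show ?thesis by (rule coeffs_in_localization[OF D tX QMax_prime[OF D st P] E f(2) g(2) j])
  qed
  then have "coeff f i \<in> star_tilde D st E" for i unfolding star_tilde_def using f(2) by blast
  then show "u \<in> genmod ?D1 (star_tilde D st E)" unfolding f(1) by (rule poly_in_genmod_polyring[OF D])
qed

theorem theorem2p3:
  fixes D :: "'a::field set" and X Y :: 'a and st :: "'a set \<Rightarrow> 'a set" and E :: "'a set"
  assumes "subring D"
    and "transc_over (qf D) X"
    and "transc_over (qf (polyring D X)) Y"
    and "semistar D st"
    and "E \<in> Fbar D"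
  shows "bracket_star D X Y st (genmod (polyring D X) E) \<inter> qf D
           = genmod (D1YS D X Y st) E \<inter> qf D
         \<and> genmod (D1YS D X Y st) E \<inter> qf D = star_tilde D st E
         \<and> bracket_star D X Y st (genmod (polyring D X) E)
           = genmod (polyring D X) (star_tilde D st E)"
proof -
  note D = assms(1) and tX = assms(2) and tY = assms(3) and st = assms(4) and E = assms(5)
  let ?D1 = "polyring D X" and ?R = "D1YS D X Y st" and ?ST = "star_tilde D st E"
  have D1: "subring ?D1" by (rule polyring_subring[OF D])
  have KK1: "qf D \<subseteq> qf ?D1" by (rule qf_mono) (use const_in_polyring[OF D] in blast)
  have ST: "is_module D ?ST" "?ST \<subseteq> qf D" by (rule star_tilde_module[OF D st])+
  have bracket: "bracket_star D X Y st (genmod ?D1 E) = genmod ?R E \<inter> qf ?D1"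
    unfolding bracket_star_def genmod_tower[OF D1YS_ring(1)[OF D tY] D1 D1YS_ring(2)[OF D tY]] ..
  have incl1: "?ST \<subseteq> genmod ?R E" by (rule star_tilde_sub_genmod[OF D tY st E])
  have incl2: "genmod ?R E \<inter> qf ?D1 \<subseteq> genmod ?D1 ?ST" by (rule genmod_D1YS_contract[OF D tX tY st E])
  have "genmod ?D1 ?ST \<subseteq> genmod ?R E"
    using genmod_least[OF module_mono_ring[OF genmod_module[OF D1YS_ring(1)[OF D tY]] D1YS_ring(2)[OF D tY]] incl1] .
  moreover have "genmod ?D1 ?ST \<subseteq> qf ?D1"
    using genmod_least[OF module_of_subring[OF qf_subring[OF D1] qf_subset[OF D1]]] ST(2) KK1 by blast
  ultimately have d: "genmod ?R E \<inter> qf ?D1 = genmod ?D1 ?ST" using incl2 by blast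
  txt \<open>(c): contract (d) to K, using E^~ D1 \<inter> K = E^~.\<close>
  have "genmod ?R E \<inter> qf D = ?ST"
    using incl1 ST(2) d KK1 genmod_polyring_contract[OF D tX ST] by blast
  then show ?thesis using bracket d KK1 by blast
qed

end
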